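(* Let $\lambda>0$ and $T>0$. A triple $(X,Y,A)$, where $A:[0,T]\to M_d(\mathbb{R})$ and $X,Y$ are random processes on $[0,T]$, solves the Hamilton system $$\frac{dX_t}{dt}=A_tX_t,\ X_0\sim p_0;\qquad \frac{dY_t}{dt}=-A_t^\top Y_t,\ Y_T=Z-X_T;\qquad A_t=\frac1\lambda\mathbb{E}[Y_tX_t^\top]\ \ (t\in[0,T])$$ if and only if there is a matrix ${\sf C}\in M_d(\mathbb{R})$ solving the characteristic equation $$\lambda\,{\sf C}=F^\top(R-F)\Sigma_0,\qquad F:=e^{2T\Omega}e^{T{\sf C}^\top},\qquad \Omega:=\tfrac12({\sf C}-{\sf C}^\top),$$ such that $$X_t=e^{2t\Omega}e^{t{\sf C}^\top}X_0,\qquad Y_t=e^{2t\Omega}e^{(T-t){\sf C}}e^{-2T\Omega}(Z-X_T),\qquad A_t=e^{2t\Omega}{\sf C}e^{-2t\Omega}.$$ For such a solution the cost is $${\sf J}[A]=\frac{\lambda T}{2}\mathrm{tr}({\sf C}^\top{\sf C})+\frac12\mathrm{tr}\big((F-R)^\top(F-R)\Sigma_0\big)+\frac12\mathbb{E}[|\xi|^2].$$ Moreover: (i) $A_t\equiv{\sf C}$ is constant in $t$ if and only if ${\sf C}$ is a normal matrix; (ii) if $\Sigma_0=I$ and ${\sf C}$ is normal, then $R$ is a normal matrix. In particular, if $\Sigma_0=I$ and $R$ is not normal, every solution $A$ of the Hamilton system is non-constant in $t$.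
   Context: Setup: $d\ge 1$. $X_0$ is a random vector in $\mathbb{R}^d$ with law $p_0$ and finite second moment $\Sigma_0=\mathbb{E}[X_0X_0^\top]$. The noise $\xi$ is a random vector in $\mathbb{R}^d$, independent of $X_0$, with zero mean and finite second moment. $R\in M_d(\mathbb{R})$ and $Z=RX_0+\xi$. The functional is ${\sf J}[A]=\mathbb{E}\big[\frac{\lambda}{2}\int_0^T\mathrm{tr}(A_t^\top A_t)\,dt+\frac12|X_T-Z|^2\big]$, where $X_t$ solves $\frac{dX_t}{dt}=A_tX_t$ from $X_0$. A real matrix $M$ is normal if $MM^\top=M^\top M$. *)

theory Defs
  imports "HOL-Probability.Probability"
begin

primrec matpow :: "real^'n^'n \<Rightarrow> nat \<Rightarrow> real^'n^'n" where
  "matpow M 0 = mat 1"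
| "matpow M (Suc k) = M ** matpow M k"

definition mexp :: "real^'n^'n \<Rightarrow> real^'n^'n" where
  "mexp M = (\<Sum>k. (1 / fact k) *\<^sub>R matpow M k)"

definition normal_matrix :: "real^'n^'n \<Rightarrow> bool" where
  "normal_matrix M \<longleftrightarrow> M ** transpose M = transpose M ** M"

definition outer :: "real^'n \<Rightarrow> real^'n \<Rightarrow> real^'n^'n" where
  "outer x y = (\<chi> i j. x $ i * y $ j)"

definition hamilton_solution ::
  "'a measure \<Rightarrow> ('a \<Rightarrow> real^'n) \<Rightarrow> ('a \<Rightarrow> real^'n) \<Rightarrow> real \<Rightarrow> real
   \<Rightarrow> (real \<Rightarrow> 'a \<Rightarrow> real^'n) \<Rightarrow> (real \<Rightarrow> 'a \<Rightarrow> real^'n) \<Rightarrow> (real \<Rightarrow> real^'n^'n) \<Rightarrow> bool" where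
  "hamilton_solution M X0 Z lam T X Y A \<longleftrightarrow>
     continuous_on {0..T} A \<and>
     (\<forall>\<omega>\<in>space M. X 0 \<omega> = X0 \<omega>) \<and>
     (\<forall>\<omega>\<in>space M. \<forall>t\<in>{0..T}. ((\<lambda>s. X s \<omega>) has_vector_derivative (A t *v X t \<omega>)) (at t within {0..T})) \<and>
     (\<forall>\<omega>\<in>space M. \<forall>t\<in>{0..T}. ((\<lambda>s. Y s \<omega>) has_vector_derivative (- (transpose (A t) *v Y t \<omega>))) (at t within {0..T})) \<and>
     (\<forall>\<omega>\<in>space M. Y T \<omega> = Z \<omega> - X T \<omega>) \<and>
     (\<forall>t\<in>{0..T}. A t = (1 / lam) *\<^sub>R integral\<^sup>L M (\<lambda>\<omega>. outer (Y t \<omega>) (X t \<omega>)))"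

definition cost ::
  "'a measure \<Rightarrow> ('a \<Rightarrow> real^'n) \<Rightarrow> real \<Rightarrow> real
   \<Rightarrow> (real \<Rightarrow> 'a \<Rightarrow> real^'n) \<Rightarrow> (real \<Rightarrow> real^'n^'n) \<Rightarrow> real" where
  "cost M Z lam T X A =
     lam / 2 * integral {0..T} (\<lambda>t. trace (transpose (A t) ** A t))
     + 1 / 2 * integral\<^sup>L M (\<lambda>\<omega>. (norm (X T \<omega> - Z \<omega>))\<^sup>2)"

definition skew_part :: "real^'n^'n \<Rightarrow> real^'n^'n" where
  "skew_part C = (1/2) *\<^sub>R (C - transpose C)"

definition Fmat :: "real \<Rightarrow> real^'n^'n \<Rightarrow> real^'n^'n" where
  "Fmat T C = mexp ((2 * T) *\<^sub>R skew_part C) ** mexp (T *\<^sub>R transpose C)"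

end

theory Submission
  imports Defs
begin

text \<open>
  For a solution of the Hamilton system, \<open>\<lambda> A\<^sub>t = E[Y\<^sub>t X\<^sub>t\<^sup>T] = \<Psi>\<^sub>t (R - \<Phi>\<^sub>T) \<Sigma>\<^sub>0 \<Phi>\<^sub>t\<^sup>T\<close>, where
  \<open>\<Phi>, \<Psi>\<close> are fundamental matrices of the state and costate equations (independence and
  centring of \<open>\<xi>\<close> kill the cross moments). Differentiating gives the Lax equation
  \<open>A' = A A\<^sup>T - A\<^sup>T A\<close>, along which the skew part \<open>\<Omega>\<close> of \<open>A\<close> is constant, so
  \<open>A\<^sub>t = e\<^sup>2\<^sup>t\<^sup>\<Omega> C e\<^sup>-\<^sup>2\<^sup>t\<^sup>\<Omega>\<close> with \<open>C = A\<^sub>0\<close>. The state and costate flows are then explicit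
  products of matrix exponentials, and the self-consistency condition at \<open>t = 0\<close> is the
  characteristic equation; conversely these explicit flows solve the system. \<open>A\<^sub>t\<close> is constant
  iff \<open>\<Omega>\<close> commutes with \<open>C\<close>, i.e. iff \<open>C\<close> is normal; then, for \<open>\<Sigma>\<^sub>0 = I\<close>, the
  characteristic equation gives \<open>R = F + \<lambda> F\<^sup>-\<^sup>T C\<close>, an element of a commutative matrix algebra
  closed under transposition, hence normal.
\<close>

section \<open>Matrix algebra\<close>

lemma matrix_mul_add_rdistrib: "((A::real^'n^'m) + B) ** C = A ** C + B ** C"
  by (vector matrix_matrix_mult_def sum.distrib[symmetric] field_simps)

lemma matrix_mul_diff_rdistrib: "((A::real^'n^'m) - B) ** C = A ** C - B ** C"
  by (vector matrix_matrix_mult_def sum_subtractf[symmetric] field_simps)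

lemma matrix_mul_diff_ldistrib: "(A::real^'n^'m) ** (B - C) = A ** B - A ** C"
  by (vector matrix_matrix_mult_def sum_subtractf[symmetric] field_simps)

lemma matrix_mul_uminus_left: "(- (A::real^'n^'m)) ** B = - (A ** B)"
  by (vector matrix_matrix_mult_def sum_negf[symmetric])

lemma matrix_mul_uminus_right: "(A::real^'n^'m) ** (- B) = - (A ** B)"
  by (vector matrix_matrix_mult_def sum_negf[symmetric])

lemma matrix_vector_mult_uminus_left: "(- (A::real^'n^'m)) *v x = - (A *v x)"
  by (simp add: matrix_vector_mult_def vec_eq_iff sum_negf)

lemma transpose_add: "transpose (A + B) = transpose A + transpose (B::real^'n^'m)"
  by (simp add: transpose_def vec_eq_iff)

lemma transpose_diff: "transpose (A - B) = transpose A - transpose (B::real^'n^'m)"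
  by (simp add: transpose_def vec_eq_iff)

lemma transpose_uminus: "transpose (- (A::real^'n^'m)) = - transpose A"
  by (simp add: transpose_def vec_eq_iff)

lemma transpose_zero: "transpose (0::real^'n^'m) = 0"
  by (simp add: transpose_def vec_eq_iff)

lemma matrix_mul_sum_right: "(A::real^'n^'m) ** sum f S = (\<Sum>x\<in>S. A ** f x)"
  by (induction S rule: infinite_finite_induct) (simp_all add: matrix_add_ldistrib)

lemma matrix_vector_mult_sum_left: "sum f S *v v = (\<Sum>x\<in>S. f x *v (v::real^'n))"
  by (induction S rule: infinite_finite_induct) (simp_all add: matrix_vector_mult_add_rdistrib)

lemma norm_square_vec: "(norm (x::'a::real_inner^'n))\<^sup>2 = (\<Sum>i\<in>UNIV. (norm (x$i))\<^sup>2)"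
  by (simp add: power2_norm_eq_inner inner_vec_def)

lemma norm_matrix_vector_mult_le: "norm (A *v x) \<le> norm (A::real^'n^'m) * norm (x::real^'n)"
proof -
  have "(norm (A *v x))\<^sup>2 = (\<Sum>i\<in>UNIV. ((A *v x)$i)\<^sup>2)"
    by (simp add: norm_square_vec)
  also have "\<dots> \<le> (\<Sum>i\<in>UNIV. (norm (A$i))\<^sup>2 * (norm x)\<^sup>2)"
  proof (rule sum_mono)
    fix i
    have "\<bar>(A *v x)$i\<bar> \<le> norm (A$i) * norm x"
      unfolding matrix_vector_mul_component by (rule Cauchy_Schwarz_ineq2)
    then show "((A *v x)$i)\<^sup>2 \<le> (norm (A$i))\<^sup>2 * (norm x)\<^sup>2"
      by (metis abs_ge_zero power2_abs power_mono power_mult_distrib)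
  qed
  also have "\<dots> = (norm A * norm x)\<^sup>2"
    by (simp add: norm_square_vec[of A] sum_distrib_right power_mult_distrib)
  finally show ?thesis
    by (rule power2_le_imp_le) simp
qed

lemma norm_transpose: "norm (transpose (A::real^'n^'m)) = norm A"
proof -
  have "(norm (transpose A))\<^sup>2 = (norm A)\<^sup>2"
    unfolding norm_square_vec[of A] norm_square_vec[of "transpose A"]
    by (simp add: norm_square_vec transpose_def real_norm_def) (rule sum.swap)
  then show ?thesis by (simp add: power2_eq_iff_nonneg)
qed

lemma row_matrix_mul: "((A::real^_^_) ** B) $ i = transpose B *v (A $ i)"
  by (auto simp add: matrix_matrix_mult_def matrix_vector_mult_def transpose_def vec_eq_iff
      mult.commute intro!: sum.cong)

lemma norm_matrix_mul_le: "norm (A ** B) \<le> norm (A::real^'n^'m) * norm (B::real^'k^'n)"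
proof -
  have "(norm (A ** B))\<^sup>2 = (\<Sum>i\<in>UNIV. (norm ((A ** B)$i))\<^sup>2)"
    by (simp add: norm_square_vec)
  also have "\<dots> \<le> (\<Sum>i\<in>UNIV. (norm (A$i))\<^sup>2 * (norm B)\<^sup>2)"
  proof (rule sum_mono)
    fix i
    have "norm ((A ** B)$i) \<le> norm (A$i) * norm B"
      unfolding row_matrix_mul using norm_matrix_vector_mult_le[of "transpose B" "A$i"]
      by (simp add: norm_transpose mult.commute)
    then show "(norm ((A ** B)$i))\<^sup>2 \<le> (norm (A$i))\<^sup>2 * (norm B)\<^sup>2"
      by (metis norm_ge_zero power_mono power_mult_distrib)
  qed
  also have "\<dots> = (norm A * norm B)\<^sup>2"
    by (simp add: norm_square_vec[of A] sum_distrib_right power_mult_distrib)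
  finally show ?thesis
    by (rule power2_le_imp_le) simp
qed

lemma bounded_bilinear_matrix_mul: "bounded_bilinear (\<lambda>(A::real^'n^'m) (B::real^'k^'n). A ** B)"
proof (rule bounded_bilinear.intro)
  show "\<exists>K. \<forall>a b. norm (a ** b) \<le> norm (a::real^'n^'m) * norm (b::real^'k^'n) * K"
    by (rule exI[of _ 1]) (simp add: norm_matrix_mul_le)
qed (simp_all add: matrix_mul_add_rdistrib matrix_add_ldistrib scalar_matrix_assoc
    matrix_scalar_ac)

lemma bounded_bilinear_matrix_vector_mult:
  "bounded_bilinear (\<lambda>(A::real^'n^'m) (x::real^'n). A *v x)"
proof (rule bounded_bilinear.intro)
  show "\<exists>K. \<forall>a b. norm (a *v b) \<le> norm (a::real^'n^'m) * norm (b::real^'n) * K"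
    by (rule exI[of _ 1]) (simp add: norm_matrix_vector_mult_le)
qed (simp_all add: matrix_vector_mult_add_rdistrib matrix_vector_right_distrib,
    simp_all add: vec_eq_iff matrix_vector_mult_def sum_distrib_left mult_ac)

lemmas bounded_linear_matrix_mul_left =
  bounded_bilinear.bounded_linear_left[OF bounded_bilinear_matrix_mul]
lemmas bounded_linear_matrix_mul_right =
  bounded_bilinear.bounded_linear_right[OF bounded_bilinear_matrix_mul]
lemmas bounded_linear_matrix_vector_mult_left =
  bounded_bilinear.bounded_linear_left[OF bounded_bilinear_matrix_vector_mult]

lemma bounded_linear_transpose: "bounded_linear (transpose :: real^'n^'m \<Rightarrow> real^'m^'n)"
  by (rule bounded_linear_intro[where K=1]) (simp_all add: transpose_add transpose_scalar norm_transpose)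

lemma bounded_linear_trace: "bounded_linear (trace :: real^'n^'n \<Rightarrow> real)"
proof (rule bounded_linear_intro[where K="real CARD('n)"])
  show "norm (trace x) \<le> norm x * real CARD('n)" for x :: "real^'n^'n"
  proof -
    have "norm (trace x) \<le> (\<Sum>i\<in>UNIV. \<bar>x $ i $ i\<bar>)"
      unfolding trace_def real_norm_def by (rule sum_abs)
    also have "\<dots> \<le> (\<Sum>i\<in>(UNIV::'n set). norm x)"
      by (intro sum_mono order_trans[OF component_le_norm_cart Finite_Cartesian_Product.norm_nth_le])
    finally show ?thesis by (simp add: mult.commute)
  qed
qed (simp_all add: trace_add, simp add: trace_def sum_distrib_left)

lemma bounded_linear_matrix_entry: "bounded_linear (\<lambda>X::real^'n^'m. X $ i $ j)"
  using bounded_linear_compose[OF bounded_linear_vec_nth[of j] bounded_linear_vec_nth[of i]]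
  by (simp add: o_def)

section \<open>The matrix exponential\<close>

lemma matpow_scaleR: "matpow (t *\<^sub>R M) k = t ^ k *\<^sub>R matpow (M::real^'n^'n) k"
  by (induction k) (simp_all add: matrix_scalar_ac scalar_matrix_assoc[symmetric])

lemma matpow_commute:
  assumes "N ** M = M ** (N::real^'n^'n)"
  shows "N ** matpow M k = matpow M k ** N"
proof (induction k)
  case (Suc k)
  have "N ** matpow M (Suc k) = M ** (N ** matpow M k)"
    by (simp add: assms matrix_mul_assoc)
  then show ?case by (simp add: Suc.IH matrix_mul_assoc)
qed simp

lemma matpow_transpose: "transpose (matpow M k) = matpow (transpose (M::real^'n^'n)) k"
proof (induction k)
  case (Suc k)
  have "transpose (matpow M (Suc k)) = transpose (matpow M k) ** transpose M"
    by (simp add: matrix_transpose_mul)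
  then show ?case by (simp add: Suc.IH matpow_commute[of "transpose M" "transpose M"])
qed simp

lemma norm_matpow_le: "norm (matpow M k) \<le> norm (mat 1 :: real^'n^'n) * norm (M::real^'n^'n) ^ k"
proof (induction k)
  case (Suc k)
  have "norm (matpow M (Suc k)) \<le> norm M * norm (matpow M k)"
    by (simp add: norm_matrix_mul_le)
  also have "\<dots> \<le> norm M * (norm (mat 1 :: real^'n^'n) * norm M ^ k)"
    by (intro mult_left_mono Suc.IH) simp
  finally show ?case by (simp add: mult_ac)
qed simp

lemma summable_mexp: "summable (\<lambda>k. (1 / fact k) *\<^sub>R matpow (M::real^'n^'n) k)"
proof (rule summable_norm_cancel, rule summable_comparison_test)
  show "\<exists>N. \<forall>k\<ge>N. norm (norm ((1 / fact k) *\<^sub>R matpow M k))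
      \<le> norm (mat 1 :: real^'n^'n) * (inverse (fact k) * norm M ^ k)"
    using norm_matpow_le[of M]
    by (auto intro!: exI[of _ 0] mult_left_mono simp: divide_simps mult_ac)
  show "summable (\<lambda>k. norm (mat 1 :: real^'n^'n) * (inverse (fact k) * norm M ^ k))"
    by (intro summable_mult summable_exp)
qed

lemma bounded_linear_mexp:
  assumes "bounded_linear (f :: real^'n^'n \<Rightarrow> 'b::real_normed_vector)"
  shows "f (mexp M) = (\<Sum>k. f ((1 / fact k) *\<^sub>R matpow M k))"
  unfolding mexp_def by (rule bounded_linear.suminf[OF assms summable_mexp])

lemma mexp_commute:
  assumes "N ** M = M ** (N::real^'n^'n)"
  shows "N ** mexp M = mexp M ** N"
proof -
  have "N ** mexp M = (\<Sum>k. (1 / fact k) *\<^sub>R (N ** matpow M k))"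
    by (simp add: bounded_linear_mexp[OF bounded_linear_matrix_mul_right] matrix_scalar_ac
        scalar_matrix_assoc[symmetric])
  also have "\<dots> = mexp M ** N"
    by (simp add: bounded_linear_mexp[OF bounded_linear_matrix_mul_left] scalar_matrix_assoc
        matpow_commute[OF assms])
  finally show ?thesis .
qed

lemma mexp_commute_mexp:
  assumes "N ** M = M ** (N::real^'n^'n)"
  shows "mexp N ** mexp M = mexp M ** mexp N"
  using assms by (metis mexp_commute)

lemma mexp_transpose: "transpose (mexp M) = mexp (transpose (M::real^'n^'n))"
  unfolding bounded_linear_mexp[OF bounded_linear_transpose]
  by (simp add: mexp_def matpow_transpose transpose_scalar)

lemma mexp_zero: "mexp (0::real^'n^'n) = mat 1"
proof -
  have "(\<lambda>k. (1 / fact k) *\<^sub>R matpow (0::real^'n^'n) k) = (\<lambda>k. if k = 0 then mat 1 else 0)"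
    by (rule ext) (case_tac k, simp_all)
  then show ?thesis
    unfolding mexp_def using sums_single[of 0 "\<lambda>_. mat 1 :: real^'n^'n"] sums_unique by fastforce
qed

lemma has_vector_derivative_matrixI:
  fixes f :: "real \<Rightarrow> real^'n^'m"
  assumes "\<And>i j. ((\<lambda>t. f t $ i $ j) has_real_derivative (f' $ i $ j)) (at t within S)"
  shows "(f has_vector_derivative f') (at t within S)"
  unfolding has_vector_derivative_def
proof (subst has_derivative_componentwise_within, intro ballI)
  fix b :: "real^'n^'m" assume "b \<in> Basis"
  then obtain i j where b: "b = axis i (axis j 1)"
    by (auto simp: Basis_vec_def)
  have "(\<lambda>x. x * f' $ i $ j) = (*) (f' $ i $ j)" by (auto simp: mult.commute)
  then show "((\<lambda>x. f x \<bullet> b) has_derivative (\<lambda>x. (x *\<^sub>R f') \<bullet> b)) (at t within S)"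
    using assms[of i j] unfolding b has_field_derivative_def by (simp add: inner_axis)
qed

text \<open>Each entry of \<open>mexp (t *\<^sub>R M)\<close> is a real power series in \<open>t\<close> with infinite radius of
  convergence, so it can be differentiated termwise.\<close>

lemma summable_mexp_entry_series:
  "summable (\<lambda>k. (matpow (M::real^'n^'n) k $ i $ j / fact k) * y ^ k)"
proof (rule summable_comparison_test)
  let ?c = "norm (mat 1 :: real^'n^'n)"
  have "norm ((matpow M k $ i $ j / fact k) * y ^ k) \<le> ?c * (inverse (fact k) * (norm M * \<bar>y\<bar>) ^ k)"
    for k
  proof -
    have "\<bar>matpow M k $ i $ j\<bar> \<le> ?c * norm M ^ k"
      by (rule order_trans[OF component_le_norm_cart
            order_trans[OF Finite_Cartesian_Product.norm_nth_le norm_matpow_le]])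
    then have "\<bar>matpow M k $ i $ j\<bar> * \<bar>y\<bar> ^ k / fact k \<le> ?c * norm M ^ k * \<bar>y\<bar> ^ k / fact k"
      by (intro divide_right_mono mult_right_mono) auto
    then show ?thesis
      by (simp add: abs_mult power_abs power_mult_distrib divide_inverse mult_ac)
  qed
  then show "\<exists>N. \<forall>k\<ge>N. norm ((matpow M k $ i $ j / fact k) * y ^ k)
      \<le> ?c * (inverse (fact k) * (norm M * \<bar>y\<bar>) ^ k)"
    by blast
  show "summable (\<lambda>k. ?c * (inverse (fact k) * (norm M * \<bar>y\<bar>) ^ k))"
    by (intro summable_mult summable_exp)
qed

lemma mexp_scaleR_entry:
  "mexp (t *\<^sub>R M) $ i $ j = (\<Sum>k. (matpow (M::real^'n^'n) k $ i $ j / fact k) * t ^ k)"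
  by (simp add: bounded_linear_mexp[OF bounded_linear_matrix_entry] matpow_scaleR mult.commute)

lemma matrix_mul_mexp_scaleR_entry:
  "(M ** mexp (t *\<^sub>R M)) $ i $ j = (\<Sum>k. diffs (\<lambda>k. matpow (M::real^'n^'n) k $ i $ j / fact k) k * t ^ k)"
proof -
  have "(M ** mexp (t *\<^sub>R M)) $ i $ j = (\<Sum>k. (M ** ((1 / fact k) *\<^sub>R matpow (t *\<^sub>R M) k)) $ i $ j)"
    by (rule bounded_linear_mexp[OF bounded_linear_compose[OF bounded_linear_matrix_entry
          bounded_linear_matrix_mul_right], unfolded o_def])
  also have "\<dots> = (\<Sum>k. diffs (\<lambda>k. matpow M k $ i $ j / fact k) k * t ^ k)"
  proof (rule suminf_cong)
    fix k
    have "real (Suc k) * (a / fact (Suc k)) = a / fact k" for a :: real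
      by (simp add: fact_Suc)
    then show "(M ** ((1 / fact k) *\<^sub>R matpow (t *\<^sub>R M) k)) $ i $ j
        = diffs (\<lambda>k. matpow M k $ i $ j / fact k) k * t ^ k"
      by (simp add: diffs_def matpow_scaleR matrix_scalar_ac scalar_matrix_assoc[symmetric])
  qed
  finally show ?thesis .
qed

lemma has_vector_derivative_mexp_scaleR:
  "((\<lambda>t. mexp (t *\<^sub>R M)) has_vector_derivative (M ** mexp (t *\<^sub>R (M::real^'n^'n)))) (at t within S)"
proof (rule has_vector_derivative_matrixI)
  fix i j
  show "((\<lambda>t. mexp (t *\<^sub>R M) $ i $ j) has_real_derivative (M ** mexp (t *\<^sub>R M)) $ i $ j) (at t within S)"
    unfolding mexp_scaleR_entry matrix_mul_mexp_scaleR_entry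
    by (rule has_field_derivative_at_within,
        rule termdiffs_strong_converges_everywhere[OF summable_mexp_entry_series])
qed

lemma has_vector_derivative_mexp_affine:
  "((\<lambda>t. mexp ((a * t + b) *\<^sub>R M)) has_vector_derivative
     (a *\<^sub>R (M ** mexp ((a * t + b) *\<^sub>R (M::real^'n^'n))))) (at t within S)"
proof -
  have "((\<lambda>t. a * t + b) has_vector_derivative a) (at t within S)"
    by (auto intro!: derivative_eq_intros simp: has_real_derivative_iff_has_vector_derivative[symmetric])
  from vector_diff_chain_within[OF this has_vector_derivative_mexp_scaleR]
  show ?thesis by (simp add: o_def)
qed

lemma matrix_mul_mexp_scaleR_commute: "M ** mexp (s *\<^sub>R M) = mexp (s *\<^sub>R M) ** (M::real^'n^'n)"
  by (rule mexp_commute) (simp add: matrix_scalar_ac scalar_matrix_assoc[symmetric])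

lemma mexp_uminus_scaleR_mul_mexp:
  "mexp ((- s) *\<^sub>R M) ** mexp ((s + r) *\<^sub>R M) = mexp (r *\<^sub>R (M::real^'n^'n))"
proof -
  define h where "h s = mexp ((- s) *\<^sub>R M) ** mexp ((s + r) *\<^sub>R M)" for s
  have "(h has_vector_derivative 0) (at s)" for s
  proof -
    have "(h has_vector_derivative
        mexp ((- s) *\<^sub>R M) ** (M ** mexp ((s + r) *\<^sub>R M))
        + ((- 1) *\<^sub>R (M ** mexp ((- s) *\<^sub>R M))) ** mexp ((s + r) *\<^sub>R M)) (at s)"
      unfolding h_def
      using bounded_bilinear.has_vector_derivative[OF bounded_bilinear_matrix_mul
          has_vector_derivative_mexp_affine[where a="- 1" and b=0]
          has_vector_derivative_mexp_affine[where a=1 and b=r]]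
      by simp
    moreover have "M ** mexp (- (s *\<^sub>R M)) = mexp (- (s *\<^sub>R M)) ** M"
      using matrix_mul_mexp_scaleR_commute[of M "- s"] by simp
    ultimately show ?thesis
      by (simp add: matrix_mul_uminus_left matrix_mul_assoc)
  qed
  then have "h s = h 0"
    using has_derivative_zero_constant[of UNIV h] by (auto simp: has_vector_derivative_def)
  then show ?thesis by (simp add: h_def mexp_zero)
qed

lemma mexp_uminus_mul_mexp: "mexp (- M) ** mexp (M::real^'n^'n) = mat 1"
  using mexp_uminus_scaleR_mul_mexp[of 1 M 0] by (simp add: mexp_zero)

lemma mexp_mul_mexp_uminus: "mexp (M::real^'n^'n) ** mexp (- M) = mat 1"
  using mexp_uminus_mul_mexp[of "- M"] by simp

lemma mexp_add_scaleR: "mexp ((s + r) *\<^sub>R M) = mexp (s *\<^sub>R M) ** mexp (r *\<^sub>R (M::real^'n^'n))"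
  using mexp_uminus_scaleR_mul_mexp[of s M r] mexp_mul_mexp_uminus[of "s *\<^sub>R M"]
  by (metis matrix_mul_assoc matrix_mul_lid scaleR_minus_left)

section \<open>Linear differential equations\<close>

text \<open>Gronwall: \<open>exp (- 2 K s) * \<parallel>u s\<parallel>\<^sup>2\<close> is non-increasing.\<close>

lemma linear_bound_deriv_zero_forward:
  fixes u :: "real \<Rightarrow> 'v::real_inner"
  assumes d: "\<And>s. s \<in> {a..b} \<Longrightarrow> (u has_vector_derivative f s) (at s within {a..b})"
    and K: "\<And>s. s \<in> {a..b} \<Longrightarrow> norm (f s) \<le> K * norm (u s)"
    and u0: "u a = 0" and t: "t \<in> {a..b}"
  shows "u t = 0"
proof -
  define g where "g s = exp (- (2*K) * s) * (u s \<bullet> u s)" for s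
  define g' where "g' s = exp (- (2*K) * s) * (2 * (u s \<bullet> f s) - 2 * K * (u s \<bullet> u s))" for s
  have dg: "(g has_real_derivative g' s) (at s within {a..t})" if "s \<in> {a..t}" for s
  proof -
    have du: "(u has_vector_derivative f s) (at s within {a..t})"
      using d[of s] that t by (auto intro: has_vector_derivative_within_subset)
    have "((\<lambda>s. u s \<bullet> u s) has_real_derivative (u s \<bullet> f s + f s \<bullet> u s)) (at s within {a..t})"
      using bounded_bilinear.has_vector_derivative[OF bounded_bilinear_inner du du]
      by (simp add: has_real_derivative_iff_has_vector_derivative)
    moreover have "((\<lambda>s. exp (- (2*K) * s)) has_real_derivative exp (- (2*K) * s) * (- (2*K)))
        (at s within {a..t})"
      by (auto intro!: derivative_eq_intros)
    ultimately show ?thesis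
      unfolding g_def g'_def using DERIV_mult by (fastforce simp: algebra_simps inner_commute)
  qed
  have g'_le: "g' s \<le> 0" if "s \<in> {a..b}" for s
  proof -
    have "u s \<bullet> f s \<le> norm (u s) * (K * norm (u s))"
      by (rule order_trans[OF norm_cauchy_schwarz mult_left_mono[OF K[OF that]]]) simp
    then have "u s \<bullet> f s \<le> K * (u s \<bullet> u s)"
      by (simp add: power2_norm_eq_inner[symmetric] power2_eq_square mult_ac)
    then show ?thesis unfolding g'_def by (simp add: mult_nonneg_nonpos)
  qed
  obtain x where x: "x \<in> {a..t}" "g t - g a = g' x * (t - a)"
    using mvt_very_simple[of a t g "\<lambda>x. (*) (g' x)"] dg t
    unfolding has_field_derivative_def by auto
  have "g' x * (t - a) \<le> 0"
    using g'_le[of x] x(1) t by (simp add: mult_nonpos_nonneg)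
  then have "exp (- (2*K) * t) * (u t \<bullet> u t) \<le> 0"
    using x u0 by (simp add: g_def)
  then have "u t \<bullet> u t \<le> 0"
    by (simp add: mult_le_0_iff)
  then show ?thesis by (metis antisym inner_ge_zero inner_eq_zero_iff)
qed

lemma linear_bound_deriv_zero_backward:
  fixes u :: "real \<Rightarrow> 'v::real_inner"
  assumes d: "\<And>s. s \<in> {a..b} \<Longrightarrow> (u has_vector_derivative f s) (at s within {a..b})"
    and K: "\<And>s. s \<in> {a..b} \<Longrightarrow> norm (f s) \<le> K * norm (u s)"
    and u0: "u b = 0" and t: "t \<in> {a..b}"
  shows "u t = 0"
proof -
  have "u (- (- t)) = 0"
  proof (rule linear_bound_deriv_zero_forward[where u="\<lambda>s. u (- s)" and f="\<lambda>s. - f (- s)" and K=K])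
    fix s assume s: "s \<in> {- b..- a}"
    have "(uminus has_vector_derivative - 1) (at s within {- b..- a})"
      by (auto intro!: derivative_eq_intros simp: has_real_derivative_iff_has_vector_derivative[symmetric])
    moreover have "(u has_vector_derivative f (- s)) (at (- s) within uminus ` {- b..- a})"
      using d[of "- s"] s by simp
    ultimately show "((\<lambda>s. u (- s)) has_vector_derivative - f (- s)) (at s within {- b..- a})"
      using vector_diff_chain_within by (fastforce simp: o_def)
    show "norm (- f (- s)) \<le> K * norm (u (- s))" using K[of "- s"] s by simp
  qed (use u0 t in auto)
  then show ?thesis by simp
qed

lemma linear_bound_deriv_zero:
  fixes u :: "real \<Rightarrow> 'v::real_inner"
  assumes d: "\<And>s. s \<in> {a..b} \<Longrightarrow> (u has_vector_derivative f s) (at s within {a..b})"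
    and K: "\<And>s. s \<in> {a..b} \<Longrightarrow> norm (f s) \<le> K * norm (u s)"
    and t0: "t0 \<in> {a..b}" and u0: "u t0 = 0" and t: "t \<in> {a..b}"
  shows "u t = 0"
proof -
  have sub: "(u has_vector_derivative f s) (at s within {c..e})"
    if "s \<in> {c..e}" "{c..e} \<subseteq> {a..b}" for s c e
    using d[of s] that by (auto intro: has_vector_derivative_within_subset)
  show ?thesis
  proof (cases "t \<le> t0")
    case True
    show ?thesis
      by (rule linear_bound_deriv_zero_backward[of a t0 u f K])
        (use sub t0 K u0 t True in auto)
  next
    case False
    show ?thesis
      by (rule linear_bound_deriv_zero_forward[of t0 b u f K])
        (use sub t0 K u0 t False in auto)
  qed
qed

lemma linear_ode_unique:
  fixes u v :: "real \<Rightarrow> real^'n" and A :: "real \<Rightarrow> real^'n^'n"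
  assumes cont: "continuous_on {a..b} A"
    and du: "\<And>s. s \<in> {a..b} \<Longrightarrow> (u has_vector_derivative A s *v u s) (at s within {a..b})"
    and dv: "\<And>s. s \<in> {a..b} \<Longrightarrow> (v has_vector_derivative A s *v v s) (at s within {a..b})"
    and t0: "t0 \<in> {a..b}" and eq: "u t0 = v t0" and t: "t \<in> {a..b}"
  shows "u t = v t"
proof -
  obtain K where K: "\<And>s. s \<in> {a..b} \<Longrightarrow> norm (A s) \<le> K"
    using compact_imp_bounded[OF compact_continuous_image[OF cont compact_Icc]]
    unfolding bounded_iff by fastforce
  have "u t - v t = 0"
  proof (rule linear_bound_deriv_zero[where u="\<lambda>s. u s - v s" and f="\<lambda>s. A s *v (u s - v s)" and K=K])
    fix s assume s: "s \<in> {a..b}"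
    show "((\<lambda>s. u s - v s) has_vector_derivative A s *v (u s - v s)) (at s within {a..b})"
      using has_vector_derivative_diff[OF du[OF s] dv[OF s]]
      by (simp add: matrix_vector_mult_diff_distrib)
    show "norm (A s *v (u s - v s)) \<le> K * norm (u s - v s)"
      by (rule order_trans[OF norm_matrix_vector_mult_le mult_right_mono[OF K[OF s]]]) simp
  qed (use t0 eq t in auto)
  then show ?thesis by simp
qed

lemma outer_matrix_vector_mult: "outer x y *v v = (y \<bullet> v) *\<^sub>R (x::real^'n)"
  by (simp add: outer_def matrix_vector_mult_def inner_vec_def vec_eq_iff sum_distrib_left mult_ac)

lemma outer_matrix_vector_mult_left: "outer (L *v x) y = (L::real^'n^'n) ** outer x y"
  by (simp add: outer_def matrix_vector_mult_def matrix_matrix_mult_def vec_eq_iff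
      sum_distrib_right sum_distrib_left mult_ac)

lemma outer_add_left: "outer (a + b) c = outer a c + outer (b::real^'n) c"
  by (simp add: outer_def vec_eq_iff algebra_simps)

lemma outer_add_right: "outer c (a + b) = outer c a + outer (c::real^'n) b"
  by (simp add: outer_def vec_eq_iff algebra_simps)

lemma transpose_outer: "transpose (outer x y) = outer (y::real^'n) x"
  by (simp add: outer_def transpose_def vec_eq_iff mult.commute)

lemma outer_matrix_vector_mult_both:
  "outer (P *v x) (S *v y) = (P::real^'n^'n) ** outer x y ** transpose (S::real^'n^'n)"
proof -
  have "outer x (S *v y) = outer x y ** transpose S"
    by (metis transpose_outer outer_matrix_vector_mult_left matrix_transpose_mul)
  then show ?thesis by (simp add: outer_matrix_vector_mult_left matrix_mul_assoc)
qed

lemma norm_outer: "norm (outer x y) = norm (x::real^'n) * norm y"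
proof -
  have "outer x y $ i = x $ i *\<^sub>R y" for i by (simp add: outer_def vec_eq_iff)
  then have "(norm (outer x y))\<^sup>2 = (norm x * norm y)\<^sup>2"
    by (simp add: norm_square_vec[of "outer x y"] power_mult_distrib norm_square_vec[of x]
        sum_distrib_right)
  then show ?thesis by (simp add: power2_eq_iff_nonneg)
qed

lemma bounded_linear_outer_left: "bounded_linear (\<lambda>x. outer (x::real^'n) y)"
  by (rule bounded_linear_intro[where K="norm y"])
    (simp_all add: outer_add_left norm_outer, simp add: outer_def vec_eq_iff)

lemma trace_outer_self: "trace (outer x x) = (norm (x::real^'n))\<^sup>2"
  unfolding norm_square_vec by (simp add: trace_def outer_def power2_eq_square)

lemma linear_functional_eq_inner:
  fixes g :: "'v::euclidean_space \<Rightarrow> real"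
  assumes "linear g"
  shows "g v = (\<Sum>i\<in>Basis. g i *\<^sub>R i) \<bullet> v"
proof -
  have "g v = g (\<Sum>i\<in>Basis. (v \<bullet> i) *\<^sub>R i)" by (simp add: euclidean_representation)
  also have "\<dots> = (\<Sum>i\<in>Basis. g i * (i \<bullet> v))"
    by (simp add: real_vector.linear_sum[OF assms] real_vector.linear_scale[OF assms]
        inner_commute mult.commute)
  finally show ?thesis by (simp add: inner_sum_left)
qed

lemma independent_dual_basis:
  fixes B :: "(real^'n) set"
  assumes "independent B"
  obtains d where "\<And>c x. c \<in> B \<Longrightarrow> x \<in> B \<Longrightarrow> d c \<bullet> x = (if x = c then 1 else 0)"
proof -
  have "\<forall>c\<in>B. \<exists>g. linear g \<and> (\<forall>x\<in>B. g x = (if x = c then 1 else (0::real)))"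
  proof
    fix c
    show "\<exists>g. linear g \<and> (\<forall>x\<in>B. g x = (if x = c then 1 else (0::real)))"
      by (rule real_vector.linear_independent_extend[OF assms])
  qed
  from bchoice[OF this] obtain G
    where G: "\<forall>c\<in>B. linear (G c) \<and> (\<forall>x\<in>B. G c x = (if x = c then 1 else (0::real)))"
    by blast
  show ?thesis
  proof (rule that[of "\<lambda>c. \<Sum>i\<in>Basis. G c i *\<^sub>R i"])
    fix c x assume "c \<in> B" "x \<in> B"
    then show "(\<Sum>i\<in>Basis. G c i *\<^sub>R i) \<bullet> x = (if x = c then 1 else 0)"
      using G linear_functional_eq_inner[of "G c" x, symmetric] by simp
  qed
qed

lemma dual_basis_expansion:
  fixes B :: "(real^'n) set"
  assumes B: "finite B" and d: "\<And>c x. c \<in> B \<Longrightarrow> x \<in> B \<Longrightarrow> d c \<bullet> x = (if x = c then 1 else 0)"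
    and v: "v \<in> span B"
  shows "(\<Sum>c\<in>B. (d c \<bullet> v) *\<^sub>R c) = v"
proof -
  have lin: "linear (\<lambda>v. \<Sum>c\<in>B. (d c \<bullet> v) *\<^sub>R c)"
    by (rule linearI) (simp_all add: inner_add_right scaleR_add_left sum.distrib scaleR_sum_right)
  have onB: "(\<Sum>c\<in>B. (d c \<bullet> x) *\<^sub>R c) = id x" if "x \<in> B" for x
  proof -
    have "(\<Sum>c\<in>B. (d c \<bullet> x) *\<^sub>R c) = (\<Sum>c\<in>B. if x = c then x else 0)"
      by (rule sum.cong) (simp_all add: d that)
    then show ?thesis using B that by simp
  qed
  have "(\<lambda>v. \<Sum>c\<in>B. (d c \<bullet> v) *\<^sub>R c) v = id v"
    by (rule real_vector.linear_eq_on_span[OF lin real_vector.linear_id onB v])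
  then show ?thesis by simp
qed

text \<open>Built from finitely many solutions whose initial values form a basis of the span of all
  initial values, so no existence theorem for linear ODEs is needed.\<close>

lemma linear_ode_fundamental_matrix:
  fixes xs :: "'a \<Rightarrow> real \<Rightarrow> real^'n" and L :: "real \<Rightarrow> real^'n^'n"
  assumes cont: "continuous_on {a..b} L"
    and sol: "\<And>\<omega> t. \<omega> \<in> S \<Longrightarrow> t \<in> {a..b} \<Longrightarrow>
                (xs \<omega> has_vector_derivative L t *v xs \<omega> t) (at t within {a..b})"
    and t0: "t0 \<in> {a..b}"
  obtains \<Phi> where "\<And>t. t \<in> {a..b} \<Longrightarrow> (\<Phi> has_vector_derivative L t ** \<Phi> t) (at t within {a..b})"
    and "\<And>\<omega> t. \<omega> \<in> S \<Longrightarrow> t \<in> {a..b} \<Longrightarrow> xs \<omega> t = \<Phi> t *v xs \<omega> t0"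
proof -
  obtain B where BV: "B \<subseteq> (\<lambda>\<omega>. xs \<omega> t0) ` S" and indB: "independent B"
    and VB: "(\<lambda>\<omega>. xs \<omega> t0) ` S \<subseteq> span B"
    by (rule real_vector.maximal_independent_subset)
  have finB: "finite B" using independent_bound[OF indB] by simp
  obtain d where d: "\<And>c x. c \<in> B \<Longrightarrow> x \<in> B \<Longrightarrow> d c \<bullet> x = (if x = c then 1 else 0)"
    using independent_dual_basis[OF indB] by blast
  have "\<forall>c\<in>B. \<exists>\<omega>. \<omega> \<in> S \<and> xs \<omega> t0 = c" using BV by blast
  from bchoice[OF this] obtain w where w: "\<And>c. c \<in> B \<Longrightarrow> w c \<in> S \<and> xs (w c) t0 = c"
    by blast
  define \<Phi> where "\<Phi> t = (\<Sum>c\<in>B. outer (xs (w c) t) (d c))" for t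
  have dPhi: "(\<Phi> has_vector_derivative L t ** \<Phi> t) (at t within {a..b})" if t: "t \<in> {a..b}" for t
  proof -
    have "(\<Phi> has_vector_derivative (\<Sum>c\<in>B. outer (L t *v xs (w c) t) (d c))) (at t within {a..b})"
      unfolding \<Phi>_def
      by (intro has_vector_derivative_sum
          bounded_linear.has_vector_derivative[OF bounded_linear_outer_left sol])
        (use w t in auto)
    moreover have "(\<Sum>c\<in>B. outer (L t *v xs (w c) t) (d c)) = L t ** \<Phi> t"
      unfolding \<Phi>_def outer_matrix_vector_mult_left by (simp add: matrix_mul_sum_right)
    ultimately show ?thesis by simp
  qed
  have "xs \<omega> t = \<Phi> t *v xs \<omega> t0" if \<omega>: "\<omega> \<in> S" and t: "t \<in> {a..b}" for \<omega> t
  proof (rule linear_ode_unique[OF cont sol[OF \<omega>] _ t0 _ t])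
    show "((\<lambda>s. \<Phi> s *v xs \<omega> t0) has_vector_derivative L s *v (\<Phi> s *v xs \<omega> t0)) (at s within {a..b})"
      if s: "s \<in> {a..b}" for s
      using bounded_linear.has_vector_derivative[OF bounded_linear_matrix_vector_mult_left dPhi[OF s]]
      by (simp add: matrix_vector_mul_assoc)
    have "\<Phi> t0 *v xs \<omega> t0 = (\<Sum>c\<in>B. (d c \<bullet> xs \<omega> t0) *\<^sub>R c)"
      unfolding \<Phi>_def using w by (simp add: matrix_vector_mult_sum_left outer_matrix_vector_mult)
    then show "xs \<omega> t0 = \<Phi> t0 *v xs \<omega> t0"
      using dual_basis_expansion[OF finB d] VB \<omega> by auto
  qed
  with dPhi that show ?thesis by blast
qed

section \<open>The explicit solution\<close>

lemma transpose_skew_part: "transpose (skew_part C) = - skew_part (C::real^'n^'n)"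
  by (auto simp: skew_part_def transpose_def vec_eq_iff field_simps)

lemma skew_part_double: "2 *\<^sub>R skew_part C = C - transpose (C::real^'n^'n)"
  by (simp add: skew_part_def)

lemma transpose_Fmat:
  "transpose (Fmat T C) = mexp (T *\<^sub>R C) ** mexp (- ((2 * T) *\<^sub>R skew_part (C::real^'n^'n)))"
  by (simp add: Fmat_def matrix_transpose_mul mexp_transpose transpose_scalar transpose_skew_part)

definition hamilton_coeff :: "real^'n^'n \<Rightarrow> real \<Rightarrow> real^'n^'n" where
  "hamilton_coeff C t = mexp ((2 * t) *\<^sub>R skew_part C) ** C ** mexp (- (2 * t) *\<^sub>R skew_part C)"

definition costate_flow :: "real^'n^'n \<Rightarrow> real \<Rightarrow> real \<Rightarrow> real^'n^'n" where
  "costate_flow C T t =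
     mexp ((2 * t) *\<^sub>R skew_part C) ** mexp ((T - t) *\<^sub>R C) ** mexp (- (2 * T) *\<^sub>R skew_part C)"

lemma hamilton_coeff_0: "hamilton_coeff C 0 = C"
  by (simp add: hamilton_coeff_def mexp_zero)

lemma Fmat_0: "Fmat 0 C = mat 1"
  by (simp add: Fmat_def mexp_zero)

lemma costate_flow_T: "costate_flow C T T = mat 1"
  by (simp add: costate_flow_def mexp_zero mexp_mul_mexp_uminus)

lemma costate_flow_0: "costate_flow C T 0 = transpose (Fmat T C)"
  by (simp add: costate_flow_def mexp_zero transpose_Fmat)

lemma transpose_hamilton_coeff:
  "transpose (hamilton_coeff C t) =
     mexp ((2 * t) *\<^sub>R skew_part C) ** transpose C ** mexp (- ((2 * t) *\<^sub>R skew_part C))"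
  by (simp add: hamilton_coeff_def matrix_transpose_mul mexp_transpose transpose_scalar
      transpose_uminus transpose_skew_part matrix_mul_assoc)

lemma has_vector_derivative_hamilton_coeff:
  "(hamilton_coeff C has_vector_derivative
      2 *\<^sub>R (skew_part C ** hamilton_coeff C t) - 2 *\<^sub>R (hamilton_coeff C t ** skew_part C)) (at t within S)"
proof -
  let ?O = "skew_part C"
  let ?E = "mexp ((2 * t) *\<^sub>R ?O)" and ?Ei = "mexp (- ((2 * t) *\<^sub>R ?O))"
  have "((\<lambda>t. mexp ((2 * t) *\<^sub>R ?O) ** C) has_vector_derivative (2 *\<^sub>R (?O ** ?E)) ** C) (at t within S)"
    using bounded_linear.has_vector_derivative[OF bounded_linear_matrix_mul_left
        has_vector_derivative_mexp_affine[where a=2 and b=0]]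
    by simp
  from bounded_bilinear.has_vector_derivative[OF bounded_bilinear_matrix_mul this
      has_vector_derivative_mexp_affine[where a="- 2" and b=0]]
  have "(hamilton_coeff C has_vector_derivative
      (?E ** C) ** (- (2 *\<^sub>R (?O ** ?Ei))) + ((2 *\<^sub>R (?O ** ?E)) ** C) ** ?Ei) (at t within S)"
    unfolding hamilton_coeff_def[abs_def] by simp
  moreover have "?O ** ?Ei = ?Ei ** ?O"
    using matrix_mul_mexp_scaleR_commute[of ?O "- (2 * t)"] by simp
  ultimately show ?thesis
    by (simp add: hamilton_coeff_def matrix_mul_uminus_right matrix_scalar_ac
        scalar_matrix_assoc[symmetric] matrix_mul_assoc)
qed

lemma has_vector_derivative_Fmat:
  "((\<lambda>t. Fmat t C) has_vector_derivative hamilton_coeff C t ** Fmat t C) (at t within S)"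
proof -
  let ?O = "skew_part C"
  let ?E = "mexp ((2 * t) *\<^sub>R ?O)" and ?Ei = "mexp (- ((2 * t) *\<^sub>R ?O))"
    and ?G = "mexp (t *\<^sub>R transpose C)"
  have "((\<lambda>t. Fmat t C) has_vector_derivative ?E ** (transpose C ** ?G) + (2 *\<^sub>R (?O ** ?E)) ** ?G)
      (at t within S)"
    using bounded_bilinear.has_vector_derivative[OF bounded_bilinear_matrix_mul
        has_vector_derivative_mexp_affine[where a=2 and b=0] has_vector_derivative_mexp_scaleR]
    unfolding Fmat_def by simp
  moreover have "?E ** (transpose C ** ?G) + (2 *\<^sub>R (?O ** ?E)) ** ?G = ?E ** ((transpose C + 2 *\<^sub>R ?O) ** ?G)"
    by (simp add: matrix_mul_mexp_scaleR_commute matrix_mul_add_rdistrib matrix_add_ldistrib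
        matrix_scalar_ac scalar_matrix_assoc[symmetric] matrix_mul_assoc)
  moreover have "transpose C + 2 *\<^sub>R ?O = C" by (simp add: skew_part_double)
  moreover have "?E ** (C ** ?G) = ?E ** C ** (?Ei ** ?E) ** ?G"
    by (simp add: mexp_uminus_mul_mexp matrix_mul_assoc)
  ultimately show ?thesis
    by (simp add: hamilton_coeff_def Fmat_def matrix_mul_assoc)
qed

lemma has_vector_derivative_costate_flow:
  "(costate_flow C T has_vector_derivative - (transpose (hamilton_coeff C t) ** costate_flow C T t))
     (at t within S)"
proof -
  let ?O = "skew_part C"
  let ?E = "mexp ((2 * t) *\<^sub>R ?O)" and ?Ei = "mexp (- ((2 * t) *\<^sub>R ?O))"
    and ?H = "mexp ((T - t) *\<^sub>R C)" and ?K = "mexp (- (2 * T) *\<^sub>R skew_part C)"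
  have "((\<lambda>t. mexp ((T - t) *\<^sub>R C)) has_vector_derivative - (C ** ?H)) (at t within S)"
    using has_vector_derivative_mexp_affine[where a="- 1" and b=T and M=C] by (simp add: algebra_simps)
  from bounded_bilinear.has_vector_derivative[OF bounded_bilinear_matrix_mul
      has_vector_derivative_mexp_affine[where a=2 and b=0] this]
  have "((\<lambda>t. mexp ((2 * t) *\<^sub>R ?O) ** mexp ((T - t) *\<^sub>R C)) has_vector_derivative
      ?E ** (- (C ** ?H)) + (2 *\<^sub>R (?O ** ?E)) ** ?H) (at t within S)"
    by simp
  from bounded_linear.has_vector_derivative[OF bounded_linear_matrix_mul_left this]
  have "(costate_flow C T has_vector_derivative (?E ** (- (C ** ?H)) + (2 *\<^sub>R (?O ** ?E)) ** ?H) ** ?K)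
      (at t within S)"
    unfolding costate_flow_def[abs_def] by simp
  moreover have "?E ** (- (C ** ?H)) + (2 *\<^sub>R (?O ** ?E)) ** ?H = ?E ** ((2 *\<^sub>R ?O - C) ** ?H)"
    by (simp add: matrix_mul_mexp_scaleR_commute matrix_mul_diff_rdistrib matrix_mul_diff_ldistrib
        matrix_mul_uminus_right matrix_scalar_ac scalar_matrix_assoc[symmetric] matrix_mul_assoc)
  moreover have "2 *\<^sub>R ?O - C = - transpose C" by (simp add: skew_part_double)
  moreover have "?E ** ((- transpose C) ** ?H) = - (?E ** transpose C ** (?Ei ** ?E) ** ?H)"
    by (simp add: mexp_uminus_mul_mexp matrix_mul_assoc matrix_mul_uminus_left matrix_mul_uminus_right)
  ultimately show ?thesis
    by (simp add: transpose_hamilton_coeff costate_flow_def matrix_mul_assoc matrix_mul_uminus_left)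
qed

lemma costate_flow_eq:
  "costate_flow C T t = mexp ((2 * t) *\<^sub>R skew_part C) ** mexp (- (t *\<^sub>R C)) ** transpose (Fmat T C)"
  using mexp_add_scaleR[of "- t" T C]
  by (simp add: costate_flow_def transpose_Fmat matrix_mul_assoc)

text \<open>The characteristic equation makes the ansatz consistent with \<open>\<lambda> A\<^sub>t = E[Y\<^sub>t X\<^sub>t\<^sup>T]\<close>.\<close>

lemma costate_state_moment_eq:
  fixes C R \<Sigma> :: "real^'n^'n"
  assumes char: "lam *\<^sub>R C = transpose (Fmat T C) ** (R - Fmat T C) ** \<Sigma>"
  shows "costate_flow C T t ** ((R - Fmat T C) ** \<Sigma>) ** transpose (Fmat t C)
    = lam *\<^sub>R hamilton_coeff C t"
proof -
  let ?E = "mexp ((2 * t) *\<^sub>R skew_part C)" and ?Ei = "mexp (- ((2 * t) *\<^sub>R skew_part C))"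
    and ?a = "mexp (- (t *\<^sub>R C))" and ?b = "mexp (t *\<^sub>R C)"
  have "costate_flow C T t ** ((R - Fmat T C) ** \<Sigma>) ** transpose (Fmat t C)
      = ?E ** ?a ** (transpose (Fmat T C) ** (R - Fmat T C) ** \<Sigma>) ** ?b ** ?Ei"
    by (simp add: costate_flow_eq transpose_Fmat matrix_mul_assoc)
  also have "\<dots> = lam *\<^sub>R (?E ** (?a ** C) ** ?b ** ?Ei)"
    by (simp add: char[symmetric] matrix_scalar_ac scalar_matrix_assoc[symmetric] matrix_mul_assoc)
  also have "?a ** C = C ** ?a"
    using matrix_mul_mexp_scaleR_commute[of C "- t"] by simp
  also have "lam *\<^sub>R (?E ** (C ** ?a) ** ?b ** ?Ei) = lam *\<^sub>R (?E ** C ** (?a ** ?b) ** ?Ei)"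
    by (simp add: matrix_mul_assoc)
  finally show ?thesis
    by (simp add: mexp_uminus_mul_mexp hamilton_coeff_def)
qed

lemma trace_hamilton_coeff:
  "trace (transpose (hamilton_coeff C t) ** hamilton_coeff C t) = trace (transpose C ** C)"
proof -
  let ?E = "mexp ((2 * t) *\<^sub>R skew_part C)" and ?Ei = "mexp (- ((2 * t) *\<^sub>R skew_part C))"
  have "transpose (hamilton_coeff C t) ** hamilton_coeff C t
      = ?E ** transpose C ** (?Ei ** ?E) ** C ** ?Ei"
    unfolding transpose_hamilton_coeff by (simp add: hamilton_coeff_def matrix_mul_assoc)
  also have "\<dots> = ?E ** (transpose C ** C ** ?Ei)"
    by (simp add: mexp_uminus_mul_mexp matrix_mul_assoc)
  also have "trace \<dots> = trace (transpose C ** C ** (?Ei ** ?E))"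
    by (metis trace_mul_sym matrix_mul_assoc)
  finally show ?thesis
    by (simp add: mexp_uminus_mul_mexp)
qed

section \<open>Normal matrices\<close>

inductive_set matrix_algebra :: "(real^'n^'n) set \<Rightarrow> (real^'n^'n) set" for S where
  generator: "A \<in> S \<Longrightarrow> A \<in> matrix_algebra S"
| add: "A \<in> matrix_algebra S \<Longrightarrow> B \<in> matrix_algebra S \<Longrightarrow> A + B \<in> matrix_algebra S"
| mult: "A \<in> matrix_algebra S \<Longrightarrow> B \<in> matrix_algebra S \<Longrightarrow> A ** B \<in> matrix_algebra S"
| scaleR: "A \<in> matrix_algebra S \<Longrightarrow> c *\<^sub>R A \<in> matrix_algebra S"

lemma matrix_algebra_commute_generator:
  assumes comm: "\<And>A B. A \<in> S \<Longrightarrow> B \<in> S \<Longrightarrow> A ** B = B ** A"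
    and "A \<in> matrix_algebra S" and "G \<in> S"
  shows "A ** G = G ** A"
  using assms(2)
proof induction
  case (mult A B)
  then show ?case by (metis matrix_mul_assoc)
qed (simp_all add: comm assms(3) matrix_mul_add_rdistrib matrix_add_ldistrib matrix_scalar_ac
    scalar_matrix_assoc[symmetric])

lemma matrix_algebra_commute:
  assumes comm: "\<And>A B. A \<in> S \<Longrightarrow> B \<in> S \<Longrightarrow> A ** B = B ** A"
    and A: "A \<in> matrix_algebra S" and "B \<in> matrix_algebra S"
  shows "A ** B = B ** A"
  using assms(3)
proof induction
  case (generator B)
  then show ?case using matrix_algebra_commute_generator[OF comm A] by blast
next
  case (mult B B')
  then show ?case by (metis matrix_mul_assoc)
qed (simp_all add: matrix_mul_add_rdistrib matrix_add_ldistrib matrix_scalar_ac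
    scalar_matrix_assoc[symmetric])

lemma transpose_in_matrix_algebra:
  assumes "\<And>A. A \<in> S \<Longrightarrow> transpose A \<in> S" and "A \<in> matrix_algebra S"
  shows "transpose A \<in> matrix_algebra S"
  using assms(2)
  by induction (simp_all add: assms(1) matrix_algebra.intros transpose_add matrix_transpose_mul
      transpose_scalar)

lemma normal_matrix_in_matrix_algebra:
  assumes "\<And>A B. A \<in> S \<Longrightarrow> B \<in> S \<Longrightarrow> A ** B = B ** A"
    and "\<And>A. A \<in> S \<Longrightarrow> transpose A \<in> S" and "A \<in> matrix_algebra S"
  shows "normal_matrix A"
  unfolding normal_matrix_def
  by (rule matrix_algebra_commute[OF assms(1,3) transpose_in_matrix_algebra[OF assms(2,3)]])

text \<open>Linear combinations of a normal \<open>C\<close> and \<open>C\<^sup>T\<close> commute pairwise; the skew part of \<open>C\<close>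
  is such a combination.\<close>

definition normal_span :: "real^'n^'n \<Rightarrow> (real^'n^'n) set" where
  "normal_span C = {a *\<^sub>R C + b *\<^sub>R transpose C | a b. True}"

lemma normal_span_commute:
  assumes C: "normal_matrix C" and "A \<in> normal_span C" and "B \<in> normal_span C"
  shows "A ** B = B ** A"
proof -
  obtain a b c d where A: "A = a *\<^sub>R C + b *\<^sub>R transpose C" and B: "B = c *\<^sub>R C + d *\<^sub>R transpose C"
    using assms(2,3) unfolding normal_span_def by blast
  have expand: "(a *\<^sub>R C + b *\<^sub>R transpose C) ** (c *\<^sub>R C + d *\<^sub>R transpose C)
      = (a * c) *\<^sub>R (C ** C) + (a * d) *\<^sub>R (C ** transpose C)
        + ((b * c) *\<^sub>R (transpose C ** C) + (b * d) *\<^sub>R (transpose C ** transpose C))"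
    for a b c d
    by (simp add: matrix_add_ldistrib matrix_mul_add_rdistrib matrix_scalar_ac
        scalar_matrix_assoc[symmetric]) (simp add: algebra_simps)
  show ?thesis
    unfolding A B expand using C by (simp add: normal_matrix_def mult.commute)
qed

lemma transpose_normal_span: "A \<in> normal_span C \<Longrightarrow> transpose A \<in> normal_span C"
  unfolding normal_span_def
  by (auto simp: transpose_add transpose_scalar) (metis add.commute)

lemma skew_part_in_normal_span: "t *\<^sub>R skew_part C \<in> normal_span C"
proof -
  have "t *\<^sub>R skew_part C = (t / 2) *\<^sub>R C + (- t / 2) *\<^sub>R transpose C"
    by (simp add: skew_part_def algebra_simps)
  then show ?thesis unfolding normal_span_def by blast
qed

lemma scaleR_in_normal_span: "t *\<^sub>R C \<in> normal_span C" "t *\<^sub>R transpose C \<in> normal_span C"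
proof -
  have "t *\<^sub>R C = t *\<^sub>R C + 0 *\<^sub>R transpose C" "t *\<^sub>R transpose C = 0 *\<^sub>R C + t *\<^sub>R transpose C"
    by simp_all
  then show "t *\<^sub>R C \<in> normal_span C" "t *\<^sub>R transpose C \<in> normal_span C"
    unfolding normal_span_def by blast+
qed

lemma normal_span_mexp_commute:
  assumes C: "normal_matrix C"
    and "A \<in> normal_span C \<union> mexp ` normal_span C" "B \<in> normal_span C \<union> mexp ` normal_span C"
  shows "A ** B = B ** A"
proof -
  obtain A' where A': "A' \<in> normal_span C" "A = A' \<or> A = mexp A'" using assms(2) by blast
  obtain B' where B': "B' \<in> normal_span C" "B = B' \<or> B = mexp B'" using assms(3) by blast
  have AB: "A' ** B' = B' ** A'" by (rule normal_span_commute[OF C A'(1) B'(1)])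
  show ?thesis
    using A'(2) B'(2) AB mexp_commute[OF AB] mexp_commute[OF AB[symmetric]] mexp_commute_mexp[OF AB]
    by auto
qed

lemma normal_mexp_skew_part_commute:
  "normal_matrix C \<Longrightarrow> mexp (t *\<^sub>R skew_part C) ** C = C ** mexp (t *\<^sub>R skew_part C)"
  using normal_span_mexp_commute[of C "mexp (t *\<^sub>R skew_part C)" C]
    skew_part_in_normal_span scaleR_in_normal_span(1)[of 1 C]
  by auto

lemma hamilton_coeff_normal: "normal_matrix C \<Longrightarrow> hamilton_coeff C t = C"
  by (simp add: hamilton_coeff_def normal_mexp_skew_part_commute mexp_mul_mexp_uminus
      matrix_mul_assoc[symmetric])

lemma hamilton_coeff_constant_iff_normal:
  assumes T: "T > 0"
  shows "(\<forall>t\<in>{0..T}. hamilton_coeff C t = C) \<longleftrightarrow> normal_matrix C"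
proof
  assume const: "\<forall>t\<in>{0..T}. hamilton_coeff C t = C"
  have "(hamilton_coeff C has_vector_derivative 0) (at 0 within {0..T})"
    by (rule has_vector_derivative_transform[where f="\<lambda>_. C"]) (use const T in auto)
  then have "2 *\<^sub>R (skew_part C ** C) - 2 *\<^sub>R (C ** skew_part C) = 0"
    using vector_derivative_unique_within_closed_interval[of 0 T 0 "hamilton_coeff C",
        unfolded cbox_interval, OF T _ has_vector_derivative_hamilton_coeff] T
    by (auto simp: hamilton_coeff_0)
  then have "(C - transpose C) ** C - C ** (C - transpose C) = 0"
    by (simp add: skew_part_double[symmetric] matrix_scalar_ac scalar_matrix_assoc[symmetric])
  then show "normal_matrix C"
    by (simp add: normal_matrix_def matrix_mul_diff_rdistrib matrix_mul_diff_ldistrib)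
qed (simp add: hamilton_coeff_normal)

lemma normal_matrix_of_characteristic_eq:
  fixes C R :: "real^'n^'n"
  assumes C: "normal_matrix C" and char: "lam *\<^sub>R C = transpose (Fmat T C) ** (R - Fmat T C)"
  shows "normal_matrix R"
proof -
  define S where "S = normal_span C \<union> mexp ` normal_span C"
  define e where "e = mexp ((2 * T) *\<^sub>R skew_part C)"
  define hi where "hi = mexp ((- T) *\<^sub>R C)"
  have inverse: "(e ** hi) ** transpose (Fmat T C) = mat 1"
    using mexp_uminus_mul_mexp[of "T *\<^sub>R C"] mexp_mul_mexp_uminus[of "(2 * T) *\<^sub>R skew_part C"]
    by (simp add: transpose_Fmat e_def hi_def matrix_mul_assoc)
      (simp add: matrix_mul_assoc[symmetric])
  have "R - Fmat T C = (e ** hi) ** (transpose (Fmat T C) ** (R - Fmat T C))"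
    by (simp add: matrix_mul_assoc inverse)
  also have "\<dots> = lam *\<^sub>R (e ** hi ** C)"
    by (simp add: char[symmetric] matrix_scalar_ac scalar_matrix_assoc)
  finally have R: "R = e ** mexp (T *\<^sub>R transpose C) + lam *\<^sub>R (e ** hi ** C)"
    by (simp add: Fmat_def e_def algebra_simps)
  have "e \<in> S" "hi \<in> S" "mexp (T *\<^sub>R transpose C) \<in> S"
    unfolding S_def e_def hi_def
    by (intro UnI2 imageI skew_part_in_normal_span scaleR_in_normal_span)+
  moreover have "C \<in> S"
    using scaleR_in_normal_span(1)[of 1 C] unfolding S_def by simp
  ultimately have "R \<in> matrix_algebra S"
    unfolding R by (intro matrix_algebra.intros)
  moreover have "A ** B = B ** A" if "A \<in> S" "B \<in> S" for A B
    using normal_span_mexp_commute[OF C] that unfolding S_def by blast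
  moreover have "transpose A \<in> S" if "A \<in> S" for A
    using that transpose_normal_span unfolding S_def by (auto simp: mexp_transpose)
  ultimately show ?thesis by (rule normal_matrix_in_matrix_algebra[rotated -1])
qed

section \<open>Second moments\<close>

lemma borel_measurable_outer:
  assumes "f \<in> borel_measurable M" "g \<in> borel_measurable M"
  shows "(\<lambda>\<omega>. outer (f \<omega>) (g \<omega> :: real^'n)) \<in> borel_measurable M"
proof (rule borel_measurable_continuous_Pair[OF assms])
  show "continuous_on UNIV (\<lambda>x. outer (fst x) (snd x :: real^'n))"
    unfolding outer_def by (intro continuous_intros)
qed

lemma integrable_outer:
  assumes "f \<in> borel_measurable M" "integrable M (\<lambda>\<omega>. (norm (f \<omega>))\<^sup>2)"
    and "g \<in> borel_measurable M" "integrable M (\<lambda>\<omega>. (norm (g \<omega>))\<^sup>2)"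
  shows "integrable M (\<lambda>\<omega>. outer (f \<omega>) (g \<omega> :: real^'n))"
proof (rule Bochner_Integration.integrable_bound[OF Bochner_Integration.integrable_add[OF assms(2,4)]])
  show "(\<lambda>\<omega>. outer (f \<omega>) (g \<omega>)) \<in> borel_measurable M"
    by (rule borel_measurable_outer[OF assms(1,3)])
  show "AE x in M. norm (outer (f x) (g x)) \<le> norm ((norm (f x))\<^sup>2 + (norm (g x))\<^sup>2)"
  proof (rule AE_I2)
    fix x
    have "2 * norm (f x) * norm (g x) \<le> (norm (f x))\<^sup>2 + (norm (g x))\<^sup>2"
      by (rule sum_squares_bound)
    moreover have "0 \<le> norm (f x) * norm (g x)" by simp
    ultimately have "norm (f x) * norm (g x) \<le> (norm (f x))\<^sup>2 + (norm (g x))\<^sup>2" by linarith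
    then show "norm (outer (f x) (g x)) \<le> norm ((norm (f x))\<^sup>2 + (norm (g x))\<^sup>2)"
      by (simp add: norm_outer)
  qed
qed

lemma (in finite_measure) integrable_of_square_integrable:
  assumes "f \<in> borel_measurable M" and "integrable M (\<lambda>\<omega>. (norm (f \<omega>))\<^sup>2)"
  shows "integrable M (f :: 'a \<Rightarrow> 'b::{banach, second_countable_topology})"
proof (rule Bochner_Integration.integrable_bound[OF Bochner_Integration.integrable_add[OF assms(2) integrable_const]])
  show "AE x in M. norm (f x) \<le> norm ((norm (f x))\<^sup>2 + (1::real))"
  proof (rule AE_I2)
    fix x
    have "2 * norm (f x) \<le> (norm (f x))\<^sup>2 + 1"
      using sum_squares_bound[of "norm (f x)" 1] by simp
    then have "norm (f x) \<le> (norm (f x))\<^sup>2 + 1"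
      using norm_ge_zero[of "f x"] by linarith
    then show "norm (f x) \<le> norm ((norm (f x))\<^sup>2 + (1::real))" by simp
  qed
qed (rule assms(1))

lemma integral_matrix_mul_both:
  fixes F :: "'a \<Rightarrow> real^'n^'n"
  assumes "integrable M F"
  shows "integrable M (\<lambda>\<omega>. P ** F \<omega> ** Q)"
    and "integral\<^sup>L M (\<lambda>\<omega>. P ** F \<omega> ** Q) = P ** integral\<^sup>L M F ** Q"
proof -
  have "bounded_linear (\<lambda>F. P ** F ** Q)"
    by (rule bounded_linear_compose[OF bounded_linear_matrix_mul_left bounded_linear_matrix_mul_right])
  from integrable_bounded_linear[OF this assms] integral_bounded_linear[OF this assms]
  show "integrable M (\<lambda>\<omega>. P ** F \<omega> ** Q)" "integral\<^sup>L M (\<lambda>\<omega>. P ** F \<omega> ** Q) = P ** integral\<^sup>L M F ** Q"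
    by simp_all
qed

locale linear_observation = prob_space M for M :: "'a measure" +
  fixes X0 xi :: "'a \<Rightarrow> real^'n" and R :: "real^'n^'n"
  assumes measurable_X0: "X0 \<in> borel_measurable M"
    and square_integrable_X0: "integrable M (\<lambda>\<omega>. (norm (X0 \<omega>))\<^sup>2)"
    and measurable_xi: "xi \<in> borel_measurable M"
    and square_integrable_xi: "integrable M (\<lambda>\<omega>. (norm (xi \<omega>))\<^sup>2)"
    and expectation_xi: "integral\<^sup>L M xi = 0"
    and indep_X0_xi: "indep_var borel X0 borel xi"
begin

abbreviation Sigma0 :: "real^'n^'n" where
  "Sigma0 \<equiv> integral\<^sup>L M (\<lambda>\<omega>. outer (X0 \<omega>) (X0 \<omega>))"

abbreviation Z :: "'a \<Rightarrow> real^'n" where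
  "Z \<equiv> \<lambda>\<omega>. R *v X0 \<omega> + xi \<omega>"

lemma integrable_outer_X0_xi:
  "integrable M (\<lambda>\<omega>. outer (X0 \<omega>) (X0 \<omega>))" "integrable M (\<lambda>\<omega>. outer (X0 \<omega>) (xi \<omega>))"
  "integrable M (\<lambda>\<omega>. outer (xi \<omega>) (X0 \<omega>))" "integrable M (\<lambda>\<omega>. outer (xi \<omega>) (xi \<omega>))"
  by (rule integrable_outer; intro measurable_X0 square_integrable_X0 measurable_xi square_integrable_xi)+

lemma integral_outer_xi_X0: "integral\<^sup>L M (\<lambda>\<omega>. outer (xi \<omega>) (X0 \<omega>)) = 0"
proof -
  have integrable: "integrable M X0" "integrable M xi"
    by (rule integrable_of_square_integrable[OF measurable_X0 square_integrable_X0],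
        rule integrable_of_square_integrable[OF measurable_xi square_integrable_xi])
  have measurable_nth: "(\<lambda>v::real^'n. v $ i) \<in> borel_measurable borel" for i
    by (intro borel_measurable_continuous_onI continuous_intros)
  have "integral\<^sup>L M (\<lambda>\<omega>. outer (xi \<omega>) (X0 \<omega>)) $ i $ j = 0" for i j
  proof -
    have "integral\<^sup>L M (\<lambda>\<omega>. outer (xi \<omega>) (X0 \<omega>)) $ i $ j = integral\<^sup>L M (\<lambda>\<omega>. X0 \<omega> $ j * xi \<omega> $ i)"
      using integral_bounded_linear[OF bounded_linear_matrix_entry integrable_outer_X0_xi(3), of i j]
      by (simp add: outer_def mult.commute)
    also have "\<dots> = integral\<^sup>L M (\<lambda>\<omega>. X0 \<omega> $ j) * integral\<^sup>L M (\<lambda>\<omega>. xi \<omega> $ i)"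
    proof (rule indep_var_lebesgue_integral)
      show "indep_var borel (\<lambda>\<omega>. X0 \<omega> $ j) borel (\<lambda>\<omega>. xi \<omega> $ i)"
        using indep_var_compose[OF indep_X0_xi measurable_nth measurable_nth] by (simp add: o_def)
      show "integrable M (\<lambda>\<omega>. X0 \<omega> $ j)" "integrable M (\<lambda>\<omega>. xi \<omega> $ i)"
        by (intro integrable_bounded_linear[OF bounded_linear_vec_nth] integrable)+
    qed
    also have "integral\<^sup>L M (\<lambda>\<omega>. xi \<omega> $ i) = 0"
      using integral_bounded_linear[OF bounded_linear_vec_nth integrable(2), of i] expectation_xi
      by simp
    finally show ?thesis by simp
  qed
  then show ?thesis by (simp add: vec_eq_iff)
qed

lemma integral_outer_X0_xi: "integral\<^sup>L M (\<lambda>\<omega>. outer (X0 \<omega>) (xi \<omega>)) = 0"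
  using integral_bounded_linear[OF bounded_linear_transpose integrable_outer_X0_xi(3)]
  by (simp add: transpose_outer integral_outer_xi_X0 transpose_zero)

lemma integral_outer_linear:
  fixes P Q S U :: "real^'n^'n"
  shows "integrable M (\<lambda>\<omega>. outer (P *v X0 \<omega> + Q *v xi \<omega>) (S *v X0 \<omega> + U *v xi \<omega>))"
    and "integral\<^sup>L M (\<lambda>\<omega>. outer (P *v X0 \<omega> + Q *v xi \<omega>) (S *v X0 \<omega> + U *v xi \<omega>))
       = P ** Sigma0 ** transpose S
         + Q ** integral\<^sup>L M (\<lambda>\<omega>. outer (xi \<omega>) (xi \<omega>)) ** transpose U"
proof -
  have expand: "outer (P *v X0 \<omega> + Q *v xi \<omega>) (S *v X0 \<omega> + U *v xi \<omega>) =
      (P ** outer (X0 \<omega>) (X0 \<omega>) ** transpose S + P ** outer (X0 \<omega>) (xi \<omega>) ** transpose U)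
      + (Q ** outer (xi \<omega>) (X0 \<omega>) ** transpose S + Q ** outer (xi \<omega>) (xi \<omega>) ** transpose U)" for \<omega>
    by (simp add: outer_add_left outer_add_right outer_matrix_vector_mult_both)
  note i1 = integral_matrix_mul_both[OF integrable_outer_X0_xi(1), of P "transpose S"]
    and i2 = integral_matrix_mul_both[OF integrable_outer_X0_xi(2), of P "transpose U"]
    and i3 = integral_matrix_mul_both[OF integrable_outer_X0_xi(3), of Q "transpose S"]
    and i4 = integral_matrix_mul_both[OF integrable_outer_X0_xi(4), of Q "transpose U"]
  show "integrable M (\<lambda>\<omega>. outer (P *v X0 \<omega> + Q *v xi \<omega>) (S *v X0 \<omega> + U *v xi \<omega>))"
    unfolding expand by (intro Bochner_Integration.integrable_add i1 i2 i3 i4)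
  show "integral\<^sup>L M (\<lambda>\<omega>. outer (P *v X0 \<omega> + Q *v xi \<omega>) (S *v X0 \<omega> + U *v xi \<omega>))
       = P ** Sigma0 ** transpose S
         + Q ** integral\<^sup>L M (\<lambda>\<omega>. outer (xi \<omega>) (xi \<omega>)) ** transpose U"
    unfolding expand
    by (simp add: Bochner_Integration.integral_add Bochner_Integration.integrable_add i1 i2 i3 i4
        integral_outer_X0_xi integral_outer_xi_X0)
qed

lemma integral_outer_costate_state:
  fixes P Q G :: "real^'n^'n"
  assumes Y: "\<And>\<omega>. \<omega> \<in> space M \<Longrightarrow> Yf \<omega> = P *v (Z \<omega> - XT \<omega>)"
    and X: "\<And>\<omega>. \<omega> \<in> space M \<Longrightarrow> Xf \<omega> = Q *v X0 \<omega>"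
    and XT: "\<And>\<omega>. \<omega> \<in> space M \<Longrightarrow> XT \<omega> = G *v X0 \<omega>"
  shows "integral\<^sup>L M (\<lambda>\<omega>. outer (Yf \<omega>) (Xf \<omega>)) = P ** ((R - G) ** Sigma0) ** transpose Q"
proof -
  have "outer (Yf \<omega>) (Xf \<omega>) = outer ((P ** (R - G)) *v X0 \<omega> + P *v xi \<omega>) (Q *v X0 \<omega> + 0 *v xi \<omega>)"
    if "\<omega> \<in> space M" for \<omega>
  proof -
    have "Yf \<omega> = P *v ((R - G) *v X0 \<omega> + xi \<omega>)"
      by (simp add: Y[OF that] XT[OF that] algebra_simps)
    then show ?thesis
      by (simp add: X[OF that] matrix_vector_right_distrib matrix_vector_mul_assoc)
  qed
  then have "integral\<^sup>L M (\<lambda>\<omega>. outer (Yf \<omega>) (Xf \<omega>))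
      = integral\<^sup>L M (\<lambda>\<omega>. outer ((P ** (R - G)) *v X0 \<omega> + P *v xi \<omega>) (Q *v X0 \<omega> + 0 *v xi \<omega>))"
    by (rule Bochner_Integration.integral_cong[OF refl])
  also have "\<dots> = P ** (R - G) ** Sigma0 ** transpose Q
      + P ** integral\<^sup>L M (\<lambda>\<omega>. outer (xi \<omega>) (xi \<omega>)) ** transpose 0"
    by (rule integral_outer_linear(2))
  finally show ?thesis
    by (simp add: matrix_mul_assoc transpose_zero)
qed

lemma integral_norm_square_residual:
  "integral\<^sup>L M (\<lambda>\<omega>. (norm (B *v X0 \<omega> - xi \<omega>))\<^sup>2)
     = trace (transpose B ** B ** Sigma0) + integral\<^sup>L M (\<lambda>\<omega>. (norm (xi \<omega>))\<^sup>2)"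
proof -
  let ?V = "\<lambda>\<omega>. B *v X0 \<omega> + (- mat 1) *v xi \<omega>"
  have residual: "B *v X0 \<omega> - xi \<omega> = ?V \<omega>" for \<omega>
    by (simp add: matrix_vector_mult_uminus_left)
  have "integral\<^sup>L M (\<lambda>\<omega>. (norm (B *v X0 \<omega> - xi \<omega>))\<^sup>2) = integral\<^sup>L M (\<lambda>\<omega>. trace (outer (?V \<omega>) (?V \<omega>)))"
    by (simp add: trace_outer_self residual)
  also have "\<dots> = trace (integral\<^sup>L M (\<lambda>\<omega>. outer (?V \<omega>) (?V \<omega>)))"
    by (rule integral_bounded_linear[OF bounded_linear_trace integral_outer_linear(1)])
  also have "\<dots> = trace (B ** Sigma0 ** transpose B) + trace (integral\<^sup>L M (\<lambda>\<omega>. outer (xi \<omega>) (xi \<omega>)))"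
    unfolding integral_outer_linear(2)
    by (simp add: trace_add matrix_mul_uminus_left matrix_mul_uminus_right transpose_uminus)
  also have "trace (integral\<^sup>L M (\<lambda>\<omega>. outer (xi \<omega>) (xi \<omega>))) = integral\<^sup>L M (\<lambda>\<omega>. (norm (xi \<omega>))\<^sup>2)"
    using integral_bounded_linear[OF bounded_linear_trace integrable_outer_X0_xi(4)]
    by (simp add: trace_outer_self)
  also have "trace (B ** Sigma0 ** transpose B) = trace (transpose B ** B ** Sigma0)"
    using trace_mul_sym[of "B ** Sigma0" "transpose B"] by (simp add: matrix_mul_assoc)
  finally show ?thesis .
qed

end

section \<open>The Hamilton system\<close>

lemma lax_equation_skew_part_constant:
  fixes A :: "real \<Rightarrow> real^'n^'n"
  assumes dA: "\<And>t. t \<in> {0..T} \<Longrightarrow>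
      (A has_vector_derivative A t ** transpose (A t) - transpose (A t) ** A t) (at t within {0..T})"
    and t: "t \<in> {0..T}"
  shows "A t - transpose (A t) = A 0 - transpose (A 0)"
proof -
  have "\<exists>c. \<forall>x\<in>{0..T}. A x - transpose (A x) = c"
  proof (rule has_derivative_zero_constant[OF convex_real_interval(5)])
    fix x assume x: "x \<in> {0..T}"
    have "((\<lambda>s. A s - transpose (A s)) has_vector_derivative
        (A x ** transpose (A x) - transpose (A x) ** A x)
        - transpose (A x ** transpose (A x) - transpose (A x) ** A x)) (at x within {0..T})"
      by (rule has_vector_derivative_diff[OF dA[OF x]
            bounded_linear.has_vector_derivative[OF bounded_linear_transpose dA[OF x]]])
    then show "((\<lambda>s. A s - transpose (A s)) has_derivative (\<lambda>h. 0)) (at x within {0..T})"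
      by (simp add: has_vector_derivative_def matrix_transpose_mul transpose_diff)
  qed
  then show ?thesis using t by fastforce
qed

lemma lax_equation_solution:
  fixes A :: "real \<Rightarrow> real^'n^'n"
  assumes dA: "\<And>t. t \<in> {0..T} \<Longrightarrow>
      (A has_vector_derivative A t ** transpose (A t) - transpose (A t) ** A t) (at t within {0..T})"
    and T: "0 \<le> T" and t: "t \<in> {0..T}"
  shows "A t = hamilton_coeff (A 0) t"
proof -
  let ?O = "skew_part (A 0)" and ?D = "\<lambda>s. A s - hamilton_coeff (A 0) s"
  have "?D t = 0"
  proof (rule linear_bound_deriv_zero[of 0 T ?D "\<lambda>s. 2 *\<^sub>R (?O ** ?D s) - 2 *\<^sub>R (?D s ** ?O)"
        "4 * norm ?O" 0 t])
    fix s assume s: "s \<in> {0..T}"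
    have "2 *\<^sub>R ?O = A s - transpose (A s)"
      using lax_equation_skew_part_constant[OF dA s] by (simp add: skew_part_double)
    then have "transpose (A s) = A s - 2 *\<^sub>R ?O" by simp
    then have "A s ** transpose (A s) - transpose (A s) ** A s = 2 *\<^sub>R (?O ** A s) - 2 *\<^sub>R (A s ** ?O)"
      by (simp add: matrix_mul_diff_ldistrib matrix_mul_diff_rdistrib matrix_scalar_ac
          scalar_matrix_assoc[symmetric])
    then have "(A has_vector_derivative 2 *\<^sub>R (?O ** A s) - 2 *\<^sub>R (A s ** ?O)) (at s within {0..T})"
      using dA[OF s] by simp
    from has_vector_derivative_diff[OF this has_vector_derivative_hamilton_coeff]
    show "(?D has_vector_derivative 2 *\<^sub>R (?O ** ?D s) - 2 *\<^sub>R (?D s ** ?O)) (at s within {0..T})"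
      by (simp add: matrix_mul_diff_ldistrib matrix_mul_diff_rdistrib algebra_simps)
    have "norm (2 *\<^sub>R (?O ** ?D s) - 2 *\<^sub>R (?D s ** ?O)) \<le> 2 * norm (?O ** ?D s) + 2 * norm (?D s ** ?O)"
      using norm_triangle_ineq4[of "2 *\<^sub>R (?O ** ?D s)" "2 *\<^sub>R (?D s ** ?O)"] by simp
    also have "\<dots> \<le> 2 * (norm ?O * norm (?D s)) + 2 * (norm (?D s) * norm ?O)"
      using norm_matrix_mul_le[of ?O "?D s"] norm_matrix_mul_le[of "?D s" ?O] by linarith
    finally show "norm (2 *\<^sub>R (?O ** ?D s) - 2 *\<^sub>R (?D s ** ?O)) \<le> 4 * norm ?O * norm (?D s)"
      by (simp add: algebra_simps)
  qed (use T t in \<open>auto simp: hamilton_coeff_0\<close>)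
  then show ?thesis by simp
qed

locale hamilton_problem = linear_observation +
  fixes lam T :: real
  assumes lam_pos: "lam > 0" and T_pos: "T > 0"
begin

definition solves_characteristic where
  "solves_characteristic C \<longleftrightarrow> lam *\<^sub>R C = transpose (Fmat T C) ** (R - Fmat T C) ** Sigma0"

definition explicit_solution where
  "explicit_solution C X Y A \<longleftrightarrow>
     (\<forall>\<omega>\<in>space M. \<forall>t\<in>{0..T}. X t \<omega> = Fmat t C *v X0 \<omega>) \<and>
     (\<forall>\<omega>\<in>space M. \<forall>t\<in>{0..T}. Y t \<omega> = costate_flow C T t *v (Z \<omega> - X T \<omega>)) \<and>
     (\<forall>t\<in>{0..T}. A t = hamilton_coeff C t)"

lemma hamilton_solution_if_characteristic:
  assumes char: "solves_characteristic C" and sol: "explicit_solution C X Y A"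
  shows "hamilton_solution M X0 Z lam T X Y A"
proof -
  have X: "\<And>\<omega> t. \<omega> \<in> space M \<Longrightarrow> t \<in> {0..T} \<Longrightarrow> X t \<omega> = Fmat t C *v X0 \<omega>"
    and Y: "\<And>\<omega> t. \<omega> \<in> space M \<Longrightarrow> t \<in> {0..T} \<Longrightarrow> Y t \<omega> = costate_flow C T t *v (Z \<omega> - X T \<omega>)"
    and A: "\<And>t. t \<in> {0..T} \<Longrightarrow> A t = hamilton_coeff C t"
    using sol unfolding explicit_solution_def by auto
  have T: "0 \<in> {0..T}" "T \<in> {0..T}" using T_pos by auto
  show ?thesis
    unfolding hamilton_solution_def
  proof (intro conjI ballI)
    show "continuous_on {0..T} A"
      using continuous_on_vector_derivative[OF has_vector_derivative_hamilton_coeff]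
      by (rule continuous_on_eq) (use A in auto)
    fix \<omega> assume \<omega>: "\<omega> \<in> space M"
    show "X 0 \<omega> = X0 \<omega>" using X[OF \<omega> T(1)] by (simp add: Fmat_0)
    show "Y T \<omega> = Z \<omega> - X T \<omega>" using Y[OF \<omega> T(2)] by (simp add: costate_flow_T)
    fix t assume t: "t \<in> {0..T}"
    show "((\<lambda>s. X s \<omega>) has_vector_derivative A t *v X t \<omega>) (at t within {0..T})"
    proof (rule has_vector_derivative_transform[OF t])
      show "((\<lambda>s. Fmat s C *v X0 \<omega>) has_vector_derivative A t *v X t \<omega>) (at t within {0..T})"
        using bounded_linear.has_vector_derivative[OF bounded_linear_matrix_vector_mult_left
            has_vector_derivative_Fmat]
        by (simp add: A[OF t] X[OF \<omega> t] matrix_vector_mul_assoc)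
    qed (simp add: X[OF \<omega>])
    show "((\<lambda>s. Y s \<omega>) has_vector_derivative - (transpose (A t) *v Y t \<omega>)) (at t within {0..T})"
    proof (rule has_vector_derivative_transform[OF t])
      show "((\<lambda>s. costate_flow C T s *v (Z \<omega> - X T \<omega>)) has_vector_derivative
          - (transpose (A t) *v Y t \<omega>)) (at t within {0..T})"
        using bounded_linear.has_vector_derivative[OF bounded_linear_matrix_vector_mult_left
            has_vector_derivative_costate_flow]
        by (simp add: A[OF t] Y[OF \<omega> t] matrix_vector_mul_assoc matrix_vector_mult_uminus_left)
    qed (simp add: Y[OF \<omega>])
  next
    fix t assume t: "t \<in> {0..T}"
    have "integral\<^sup>L M (\<lambda>\<omega>. outer (Y t \<omega>) (X t \<omega>))
        = costate_flow C T t ** ((R - Fmat T C) ** Sigma0) ** transpose (Fmat t C)"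
      by (rule integral_outer_costate_state[OF Y[OF _ t] X[OF _ t] X[OF _ T(2)]])
    also have "\<dots> = lam *\<^sub>R hamilton_coeff C t"
      using char unfolding solves_characteristic_def by (rule costate_state_moment_eq)
    finally show "A t = (1 / lam) *\<^sub>R integral\<^sup>L M (\<lambda>\<omega>. outer (Y t \<omega>) (X t \<omega>))"
      using A[OF t] lam_pos by simp
  qed
qed

lemma hamilton_solution_lax_equation:
  assumes H: "hamilton_solution M X0 Z lam T X Y A" and t: "t \<in> {0..T}"
  shows "(A has_vector_derivative A t ** transpose (A t) - transpose (A t) ** A t) (at t within {0..T})"
proof -
  have contA: "continuous_on {0..T} A"
    and X_0: "\<And>\<omega>. \<omega> \<in> space M \<Longrightarrow> X 0 \<omega> = X0 \<omega>"
    and dX: "\<And>\<omega> t. \<omega> \<in> space M \<Longrightarrow> t \<in> {0..T} \<Longrightarrow>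
               ((\<lambda>s. X s \<omega>) has_vector_derivative A t *v X t \<omega>) (at t within {0..T})"
    and dY: "\<And>\<omega> t. \<omega> \<in> space M \<Longrightarrow> t \<in> {0..T} \<Longrightarrow>
               ((\<lambda>s. Y s \<omega>) has_vector_derivative (- transpose (A t)) *v Y t \<omega>) (at t within {0..T})"
    and YT: "\<And>\<omega>. \<omega> \<in> space M \<Longrightarrow> Y T \<omega> = Z \<omega> - X T \<omega>"
    and A: "\<And>t. t \<in> {0..T} \<Longrightarrow> A t = (1 / lam) *\<^sub>R integral\<^sup>L M (\<lambda>\<omega>. outer (Y t \<omega>) (X t \<omega>))"
    using H unfolding hamilton_solution_def by (auto simp: matrix_vector_mult_uminus_left)
  have T: "0 \<in> {0..T}" "T \<in> {0..T}" using T_pos by auto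
  have contL: "continuous_on {0..T} (\<lambda>t. - transpose (A t))"
    by (intro continuous_on_minus bounded_linear.continuous_on[OF bounded_linear_transpose contA])
  obtain \<Phi> where d\<Phi>: "\<And>t. t \<in> {0..T} \<Longrightarrow> (\<Phi> has_vector_derivative A t ** \<Phi> t) (at t within {0..T})"
    and X\<Phi>: "\<And>\<omega> t. \<omega> \<in> space M \<Longrightarrow> t \<in> {0..T} \<Longrightarrow> X t \<omega> = \<Phi> t *v X0 \<omega>"
    using linear_ode_fundamental_matrix[OF contA, of "space M" "\<lambda>\<omega> s. X s \<omega>", OF dX T(1)] X_0
    by metis
  obtain \<Psi> where d\<Psi>: "\<And>t. t \<in> {0..T} \<Longrightarrow>
      (\<Psi> has_vector_derivative (- transpose (A t)) ** \<Psi> t) (at t within {0..T})"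
    and Y\<Psi>: "\<And>\<omega> t. \<omega> \<in> space M \<Longrightarrow> t \<in> {0..T} \<Longrightarrow> Y t \<omega> = \<Psi> t *v (Z \<omega> - X T \<omega>)"
    using linear_ode_fundamental_matrix[OF contL, of "space M" "\<lambda>\<omega> s. Y s \<omega>", OF dY T(2)] YT
    by metis
  define K where "K = (R - \<Phi> T) ** Sigma0"
  define W where "W t = \<Psi> t ** K ** transpose (\<Phi> t)" for t
  have W: "W s = lam *\<^sub>R A s" if s: "s \<in> {0..T}" for s
  proof -
    have "integral\<^sup>L M (\<lambda>\<omega>. outer (Y s \<omega>) (X s \<omega>)) = W s"
      unfolding W_def K_def
      by (rule integral_outer_costate_state[OF Y\<Psi>[OF _ s] X\<Phi>[OF _ s] X\<Phi>[OF _ T(2)]])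
    then show ?thesis using A[OF s] lam_pos by simp
  qed
  have "((\<lambda>t. \<Psi> t ** K) has_vector_derivative (- transpose (A t)) ** \<Psi> t ** K) (at t within {0..T})"
    using bounded_linear.has_vector_derivative[OF bounded_linear_matrix_mul_left d\<Psi>[OF t]] .
  from bounded_bilinear.has_vector_derivative[OF bounded_bilinear_matrix_mul this
      bounded_linear.has_vector_derivative[OF bounded_linear_transpose d\<Phi>[OF t]]]
  have "(W has_vector_derivative W t ** transpose (A t) - transpose (A t) ** W t) (at t within {0..T})"
    unfolding W_def[abs_def]
    by (simp add: W_def matrix_transpose_mul matrix_mul_assoc matrix_mul_uminus_left)
  from bounded_linear.has_vector_derivative[OF bounded_linear_scaleR_right[of "1 / lam"] this]
  have "((\<lambda>s. (1 / lam) *\<^sub>R W s) has_vector_derivative A t ** transpose (A t) - transpose (A t) ** A t)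
      (at t within {0..T})"
    using lam_pos by (simp add: W[OF t] scalar_matrix_assoc[symmetric] matrix_scalar_ac scaleR_diff_right)
  then show ?thesis
    by (rule has_vector_derivative_transform[OF t, rotated]) (use W lam_pos in simp)
qed

lemma hamilton_solution_explicit:
  assumes H: "hamilton_solution M X0 Z lam T X Y A"
  shows "solves_characteristic (A 0) \<and> explicit_solution (A 0) X Y A"
proof -
  define C where "C = A 0"
  have contA: "continuous_on {0..T} A"
    and X_0: "\<And>\<omega>. \<omega> \<in> space M \<Longrightarrow> X 0 \<omega> = X0 \<omega>"
    and dX: "\<And>\<omega> t. \<omega> \<in> space M \<Longrightarrow> t \<in> {0..T} \<Longrightarrow>
               ((\<lambda>s. X s \<omega>) has_vector_derivative A t *v X t \<omega>) (at t within {0..T})"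
    and dY: "\<And>\<omega> t. \<omega> \<in> space M \<Longrightarrow> t \<in> {0..T} \<Longrightarrow>
               ((\<lambda>s. Y s \<omega>) has_vector_derivative (- transpose (A t)) *v Y t \<omega>) (at t within {0..T})"
    and YT: "\<And>\<omega>. \<omega> \<in> space M \<Longrightarrow> Y T \<omega> = Z \<omega> - X T \<omega>"
    and A: "\<And>t. t \<in> {0..T} \<Longrightarrow> A t = (1 / lam) *\<^sub>R integral\<^sup>L M (\<lambda>\<omega>. outer (Y t \<omega>) (X t \<omega>))"
    using H unfolding hamilton_solution_def by (auto simp: matrix_vector_mult_uminus_left)
  have T: "0 \<in> {0..T}" "T \<in> {0..T}" using T_pos by auto
  have AC: "A t = hamilton_coeff C t" if "t \<in> {0..T}" for t
    unfolding C_def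
    using lax_equation_solution[OF hamilton_solution_lax_equation[OF H] _ that] T_pos by simp
  have XC: "X t \<omega> = Fmat t C *v X0 \<omega>" if \<omega>: "\<omega> \<in> space M" and t: "t \<in> {0..T}" for \<omega> t
  proof (rule linear_ode_unique[OF contA dX[OF \<omega>] _ T(1) _ t])
    show "((\<lambda>s. Fmat s C *v X0 \<omega>) has_vector_derivative A s *v (Fmat s C *v X0 \<omega>)) (at s within {0..T})"
      if "s \<in> {0..T}" for s
      using bounded_linear.has_vector_derivative[OF bounded_linear_matrix_vector_mult_left
          has_vector_derivative_Fmat]
      by (simp add: AC[OF that] matrix_vector_mul_assoc)
    show "X 0 \<omega> = Fmat 0 C *v X0 \<omega>" by (simp add: X_0[OF \<omega>] Fmat_0)
  qed
  have contL: "continuous_on {0..T} (\<lambda>t. - transpose (A t))"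
    by (intro continuous_on_minus bounded_linear.continuous_on[OF bounded_linear_transpose contA])
  have YC: "Y t \<omega> = costate_flow C T t *v (Z \<omega> - X T \<omega>)"
    if \<omega>: "\<omega> \<in> space M" and t: "t \<in> {0..T}" for \<omega> t
  proof (rule linear_ode_unique[OF contL dY[OF \<omega>] _ T(2) _ t])
    show "((\<lambda>s. costate_flow C T s *v (Z \<omega> - X T \<omega>)) has_vector_derivative
        (- transpose (A s)) *v (costate_flow C T s *v (Z \<omega> - X T \<omega>))) (at s within {0..T})"
      if "s \<in> {0..T}" for s
      using bounded_linear.has_vector_derivative[OF bounded_linear_matrix_vector_mult_left
          has_vector_derivative_costate_flow]
      by (simp add: AC[OF that] matrix_vector_mul_assoc matrix_vector_mult_uminus_left
          matrix_mul_uminus_left)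
    show "Y T \<omega> = costate_flow C T T *v (Z \<omega> - X T \<omega>)" by (simp add: YT[OF \<omega>] costate_flow_T)
  qed
  have "lam *\<^sub>R C = integral\<^sup>L M (\<lambda>\<omega>. outer (Y 0 \<omega>) (X 0 \<omega>))"
    using A[OF T(1)] lam_pos by (simp add: C_def)
  also have "\<dots> = costate_flow C T 0 ** ((R - Fmat T C) ** Sigma0) ** transpose (Fmat 0 C)"
    by (rule integral_outer_costate_state[OF YC[OF _ T(1)] XC[OF _ T(1)] XC[OF _ T(2)]])
  finally have "solves_characteristic C"
    by (simp add: solves_characteristic_def costate_flow_0 Fmat_0 matrix_mul_assoc)
  moreover have "explicit_solution C X Y A"
    using XC YC AC by (simp add: explicit_solution_def)
  ultimately show ?thesis by (simp add: C_def)
qed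

lemma hamilton_solution_iff:
  "hamilton_solution M X0 Z lam T X Y A \<longleftrightarrow> (\<exists>C. solves_characteristic C \<and> explicit_solution C X Y A)"
  using hamilton_solution_explicit hamilton_solution_if_characteristic by blast

lemma cost_explicit_solution:
  assumes "explicit_solution C X Y A"
  shows "cost M Z lam T X A = lam * T / 2 * trace (transpose C ** C)
          + 1/2 * trace (transpose (Fmat T C - R) ** (Fmat T C - R) ** Sigma0)
          + 1/2 * integral\<^sup>L M (\<lambda>\<omega>. (norm (xi \<omega>))\<^sup>2)"
proof -
  have X: "\<And>\<omega>. \<omega> \<in> space M \<Longrightarrow> X T \<omega> = Fmat T C *v X0 \<omega>"
    and A: "\<And>t. t \<in> {0..T} \<Longrightarrow> A t = hamilton_coeff C t"
    using assms T_pos unfolding explicit_solution_def by auto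
  have "integral {0..T} (\<lambda>t. trace (transpose (A t) ** A t)) = integral {0..T} (\<lambda>t. trace (transpose C ** C))"
    by (rule Henstock_Kurzweil_Integration.integral_cong) (simp add: A trace_hamilton_coeff)
  also have "\<dots> = T * trace (transpose C ** C)" using T_pos by simp
  finally have control: "integral {0..T} (\<lambda>t. trace (transpose (A t) ** A t)) = T * trace (transpose C ** C)" .
  have "integral\<^sup>L M (\<lambda>\<omega>. (norm (X T \<omega> - Z \<omega>))\<^sup>2)
      = integral\<^sup>L M (\<lambda>\<omega>. (norm ((Fmat T C - R) *v X0 \<omega> - xi \<omega>))\<^sup>2)"
    by (rule Bochner_Integration.integral_cong) (simp_all add: X matrix_vector_mult_diff_rdistrib algebra_simps)
  then show ?thesis
    unfolding cost_def control integral_norm_square_residual by (simp add: algebra_simps)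
qed

lemma explicit_solution_constant_iff_normal:
  assumes "explicit_solution C X Y A"
  shows "(\<forall>t\<in>{0..T}. A t = C) \<longleftrightarrow> normal_matrix C"
  using assms hamilton_coeff_constant_iff_normal[OF T_pos] by (simp add: explicit_solution_def)

lemma normal_observation_matrix:
  assumes "solves_characteristic C" "Sigma0 = mat 1" "normal_matrix C"
  shows "normal_matrix R"
  using assms normal_matrix_of_characteristic_eq[of C lam T R] by (simp add: solves_characteristic_def)

lemma hamilton_solution_nonconstant:
  assumes H: "hamilton_solution M X0 Z lam T X Y A" and "Sigma0 = mat 1" "\<not> normal_matrix R"
  shows "\<nexists>B. \<forall>t\<in>{0..T}. A t = B"
proof
  assume "\<exists>B. \<forall>t\<in>{0..T}. A t = B"
  then have "\<forall>t\<in>{0..T}. A t = A 0" using T_pos by fastforce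
  with hamilton_solution_explicit[OF H] explicit_solution_constant_iff_normal
  show False using normal_observation_matrix assms(2,3) by blast
qed

end

theorem proposition2:
  fixes M :: "'a measure"
    and X0 xi :: "'a \<Rightarrow> real^'n"
    and R :: "real^'n^'n"
    and lam T :: real
  defines "Z \<equiv> (\<lambda>\<omega>. R *v X0 \<omega> + xi \<omega>)"
    and "Sigma0 \<equiv> integral\<^sup>L M (\<lambda>\<omega>. outer (X0 \<omega>) (X0 \<omega>))"
  assumes "prob_space M"
    and "X0 \<in> borel_measurable M" and "integrable M (\<lambda>\<omega>. (norm (X0 \<omega>))\<^sup>2)"
    and "xi \<in> borel_measurable M" and "integrable M (\<lambda>\<omega>. (norm (xi \<omega>))\<^sup>2)"
    and "integral\<^sup>L M xi = 0"
    and "prob_space.indep_var M borel X0 borel xi"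
    and "lam > 0" and "T > 0"
  shows
    "(\<forall>X Y A. hamilton_solution M X0 Z lam T X Y A \<longleftrightarrow>
        (\<exists>C. lam *\<^sub>R C = transpose (Fmat T C) ** (R - Fmat T C) ** Sigma0 \<and>
          (\<forall>\<omega>\<in>space M. \<forall>t\<in>{0..T}. X t \<omega> = (mexp ((2 * t) *\<^sub>R skew_part C) ** mexp (t *\<^sub>R transpose C)) *v X0 \<omega>) \<and>
          (\<forall>\<omega>\<in>space M. \<forall>t\<in>{0..T}. Y t \<omega> = (mexp ((2 * t) *\<^sub>R skew_part C) ** mexp ((T - t) *\<^sub>R C)
                                    ** mexp (- (2 * T) *\<^sub>R skew_part C)) *v (Z \<omega> - X T \<omega>)) \<and>
          (\<forall>t\<in>{0..T}. A t = mexp ((2 * t) *\<^sub>R skew_part C) ** C ** mexp (- (2 * t) *\<^sub>R skew_part C))))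
   \<and> (\<forall>X Y A C. hamilton_solution M X0 Z lam T X Y A \<and>
        lam *\<^sub>R C = transpose (Fmat T C) ** (R - Fmat T C) ** Sigma0 \<and>
        (\<forall>\<omega>\<in>space M. \<forall>t\<in>{0..T}. X t \<omega> = (mexp ((2 * t) *\<^sub>R skew_part C) ** mexp (t *\<^sub>R transpose C)) *v X0 \<omega>) \<and>
        (\<forall>\<omega>\<in>space M. \<forall>t\<in>{0..T}. Y t \<omega> = (mexp ((2 * t) *\<^sub>R skew_part C) ** mexp ((T - t) *\<^sub>R C)
                                  ** mexp (- (2 * T) *\<^sub>R skew_part C)) *v (Z \<omega> - X T \<omega>)) \<and>
        (\<forall>t\<in>{0..T}. A t = mexp ((2 * t) *\<^sub>R skew_part C) ** C ** mexp (- (2 * t) *\<^sub>R skew_part C))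
      \<longrightarrow>
        cost M Z lam T X A =
          lam * T / 2 * trace (transpose C ** C)
          + 1/2 * trace (transpose (Fmat T C - R) ** (Fmat T C - R) ** Sigma0)
          + 1/2 * integral\<^sup>L M (\<lambda>\<omega>. (norm (xi \<omega>))\<^sup>2)
        \<and> ((\<forall>t\<in>{0..T}. A t = C) \<longleftrightarrow> normal_matrix C)
        \<and> (Sigma0 = mat 1 \<and> normal_matrix C \<longrightarrow> normal_matrix R))
   \<and> (Sigma0 = mat 1 \<and> \<not> normal_matrix R \<longrightarrow>
        (\<forall>X Y A. hamilton_solution M X0 Z lam T X Y A \<longrightarrow> \<not> (\<exists>B. \<forall>t\<in>{0..T}. A t = B)))"
proof -
  interpret hamilton_problem M X0 xi R lam T
    using assms by (simp add: hamilton_problem_def hamilton_problem_axioms_def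
        linear_observation_def linear_observation_axioms_def)
  show ?thesis
    unfolding Z_def Sigma0_def Fmat_def[symmetric] costate_flow_def[symmetric]
      hamilton_coeff_def[symmetric] solves_characteristic_def[symmetric]
      explicit_solution_def[symmetric]
    using hamilton_solution_iff cost_explicit_solution explicit_solution_constant_iff_normal
      normal_observation_matrix hamilton_solution_nonconstant
    by blast
qed

end
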